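(* Let $Q^f$ be a kernel operator on $\mathcal{X}$ satisfying Assumptions 1, 2 and 3, let $\Lambda>0$ be the spectral radius of $Q^f$ on $L^\infty_W(\mathcal{X})$ and $h\in L^\infty_W(\mathcal{X})$ an eigenfunction with $Q^fh=\Lambda h$, $\|h\|_{L^\infty_W}=1$ and $0<h(x)<+\infty$ for all $x$ (such $h$ exists). Define the $h$-transformed kernel $Q_h\phi=\Lambda^{-1}h^{-1}Q^f(h\phi)$. Then $Q_h$ is a Markov kernel ($Q_h\mathbb{1}=\mathbb{1}$), $Wh^{-1}\geq1$, and $Wh^{-1}$ is a Lyapunov function for $Q_h$, i.e. there exist $\gamma\in(0,1)$ and $C\geq0$ with $Q_h(Wh^{-1})\leq\gamma Wh^{-1}+C$. Moreover, $Q_h$ has a unique invariant probability measure $\mu_h\in\mathcal{P}(\mathcal{X})$, it satisfies $\mu_h(Wh^{-1})<+\infty$, and there exist constants $c>0$ and $\bar\alpha\in(0,1)$ such that for every $\phi\in L^\infty_{Wh^{-1}}(\mathcal{X})$ and every $k\geq1$, $$\big\|Q_h^k\phi-\mu_h(\phi)\big\|_{L^\infty_{Wh^{-1}}}\leq c\,\bar\alpha^k\,\|\phi-\mu_h(\phi)\|_{L^\infty_{Wh^{-1}}}.$$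
   Context: $\mathcal{X}$ is a Polish space and $\mathcal{P}(\mathcal{X})$ denotes the set of probability measures on $\mathcal{X}$. A kernel operator $Q^f$ on $\mathcal{X}$ is a map such that for every $x\in\mathcal{X}$, $Q^f(x,\cdot)$ is a positive measure of finite mass, and for every measurable $A\subset\mathcal{X}$, $x\mapsto Q^f(x,A)$ is measurable; one writes $(Q^f\varphi)(x)=\int_{\mathcal{X}}\varphi(y)\,Q^f(x,dy)$, $\mu(\varphi)=\int\varphi\,d\mu$, and $\mathbb{1}$ for the constant function $1$. $(K_n)_{n\geq1}$ is a fixed increasing sequence of compact subsets of $\mathcal{X}$ such that every compact $K\subset\mathcal{X}$ is contained in some $K_m$. For a measurable $V:\mathcal{X}\to[1,+\infty)$, $L^\infty_V(\mathcal{X})$ is the Banach space of measurable $\varphi$ with $\|\varphi\|_{L^\infty_V}:=\sup_{x}|\varphi(x)|/V(x)<+\infty$. Assumption 1 (Lyapunov): there exist $W:\mathcal{X}\to[1,+\infty)$ bounded on compact sets and positive sequences $(\gamma_n)_{n\ge1}$, $(b_n)_{n\ge1}$ with $\gamma_n\to0$ such that for all $n\geq1$, $Q^fW\leq \gamma_n W+b_n\mathbb{1}_{K_n}$ pointwise. Assumption 2 (minorization and irreducibility): for each $n\geq1$ there exist $\eta_n\in\mathcal{P}(\mathcal{X})$ and $\alpha_n>0$ such that $Q^f(x,\cdot)\geq\alpha_n\eta_n(\cdot)$ (as measures) for all $x\in K_n$; moreover, for any $n_0\geq1$ and any $\varphi\in L^\infty_W(\mathcal{X})$ with $\varphi\geq0$,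 if $\eta_n(\varphi)=0$ for all $n\geq n_0$, then $(Q^f\varphi)(x)=0$ for all $x\in\mathcal{X}$. Assumption 3 (local regularity): for every $n\geq1$ and every measurable function $\varphi$ bounded on $K_n$, the function $Q^f(\varphi\mathbb{1}_{K_n})$ is continuous on $K_n$. The spectral radius of $Q^f$ on $L^\infty_W(\mathcal{X})$ is $\Lambda=\lim_{k\to\infty}\|(Q^f)^k\|^{1/k}$ (operator norm on $L^\infty_W$). *)

theory Defs
  imports "HOL-Probability.Probability"
begin

definition is_kernel :: "('a::polish_space \<Rightarrow> 'a measure) \<Rightarrow> bool" where
  "is_kernel Q \<longleftrightarrow>
     (\<forall>x. sets (Q x) = sets borel \<and> finite_measure (Q x)) \<and>
     (\<forall>A\<in>sets borel. (\<lambda>x. emeasure (Q x) A) \<in> borel_measurable borel)"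

definition kop :: "('a \<Rightarrow> 'a measure) \<Rightarrow> ('a \<Rightarrow> real) \<Rightarrow> 'a \<Rightarrow> real" where
  "kop Q \<phi> x = (\<integral>y. \<phi> y \<partial>(Q x))"

definition normV :: "('a \<Rightarrow> real) \<Rightarrow> ('a \<Rightarrow> real) \<Rightarrow> real" where
  "normV V \<phi> = (SUP x. \<bar>\<phi> x\<bar> / V x)"

definition LinfV :: "('a::topological_space \<Rightarrow> real) \<Rightarrow> ('a \<Rightarrow> real) set" where
  "LinfV V = {\<phi>. \<phi> \<in> borel_measurable borel \<and> bdd_above (range (\<lambda>x. \<bar>\<phi> x\<bar> / V x))}"

definition opnormV :: "('a::topological_space \<Rightarrow> real) \<Rightarrow> (('a \<Rightarrow> real) \<Rightarrow> ('a \<Rightarrow> real)) \<Rightarrow> real" where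
  "opnormV W T = (SUP \<phi>\<in>{\<phi>\<in>LinfV W. normV W \<phi> \<le> 1}. normV W (T \<phi>))"

definition spectral_radiusV :: "('a::topological_space \<Rightarrow> real) \<Rightarrow> ('a \<Rightarrow> 'a measure) \<Rightarrow> real" where
  "spectral_radiusV W Q = lim (\<lambda>k. root k (opnormV W (kop Q ^^ k)))"

definition htrans :: "('a \<Rightarrow> 'a measure) \<Rightarrow> real \<Rightarrow> ('a \<Rightarrow> real) \<Rightarrow> ('a \<Rightarrow> real) \<Rightarrow> 'a \<Rightarrow> real" where
  "htrans Q \<Lambda> h \<phi> x = kop Q (\<lambda>y. h y * \<phi> y) x / (\<Lambda> * h x)"

end

theory Submission
  imports Defs
begin

text \<open>Since \<open>Q h = \<Lambda> h\<close>, the kernel \<open>Q\<^sub>h \<phi> = Q (h \<phi>) / (\<Lambda> h)\<close> is Markov, and the Lyapunov bound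
  \<open>Q W \<le> \<gamma>\<^sub>n W + b\<^sub>n 1\<^sub>K\<^sub>n\<close> divided by \<open>\<Lambda> h\<close> becomes a drift condition
  \<open>Q\<^sub>h V \<le> (\<gamma>\<^sub>n / \<Lambda>) V + C\<close> for \<open>V = W / h\<close>, with \<open>\<gamma>\<^sub>n / \<Lambda>\<close> as small as we like.
  Since \<open>h\<close> is bounded above on compacts and \<open>Q\<^sub>h V \<ge> 1\<close>, every sublevel set of \<open>V\<close> lies in some
  \<open>K\<^sub>m\<close>, where the minorization of \<open>Q\<close> by \<open>\<eta>\<^sub>m\<close> turns into one of \<open>Q\<^sub>h\<close> by the probability
  \<open>h \<eta>\<^sub>m / \<eta>\<^sub>m(h)\<close>. Harris' theorem, in the form of Hairer and Mattingly, then gives a contraction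
  of \<open>Q\<^sub>h\<close> for a weighted oscillation seminorm; its iterates converge geometrically to a
  constant \<open>\<mu>\<^sub>h(\<phi>)\<close>, and \<open>\<phi> \<mapsto> \<mu>\<^sub>h(\<phi>)\<close> is the unique invariant probability measure.\<close>

lemma bounded_range_iff: "bounded (range f) \<longleftrightarrow> (\<exists>B. \<forall>x. \<bar>f x :: real\<bar> \<le> B)"
  unfolding bounded_iff by auto

lemma LinfV_iff:
  assumes "\<And>x. 0 < V x"
  shows "\<phi> \<in> LinfV V \<longleftrightarrow> \<phi> \<in> borel_measurable borel \<and> (\<exists>N. \<forall>x. \<bar>\<phi> x\<bar> \<le> N * V x)"
  unfolding LinfV_def bdd_above_def using assms by (auto simp: pos_divide_le_eq)

lemma LinfV_measurable: "\<phi> \<in> LinfV V \<Longrightarrow> \<phi> \<in> borel_measurable borel"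
  unfolding LinfV_def by blast

lemma abs_le_normV:
  assumes "\<phi> \<in> LinfV V" "0 < V x"
  shows "\<bar>\<phi> x\<bar> \<le> normV V \<phi> * V x"
proof -
  have "bdd_above (range (\<lambda>x. \<bar>\<phi> x\<bar> / V x))" using assms(1) unfolding LinfV_def by simp
  then have "\<bar>\<phi> x\<bar> / V x \<le> normV V \<phi>" unfolding normV_def by (rule cSUP_upper[OF UNIV_I])
  then show ?thesis using assms(2) by (simp add: pos_divide_le_eq)
qed

lemma normV_le:
  assumes "\<And>x. \<bar>\<phi> x\<bar> \<le> M * V x" "\<And>x. 0 < V x"
  shows "normV V \<phi> \<le> M"
  unfolding normV_def by (rule cSUP_least) (use assms in \<open>auto simp: pos_divide_le_eq\<close>)

lemma integrable_LinfV:
  assumes "integrable M V" "sets M = sets borel" "\<And>x. 0 < V x" "\<phi> \<in> LinfV V"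
  shows "integrable M \<phi>"
proof -
  obtain N where N: "\<And>x. \<bar>\<phi> x\<bar> \<le> N * V x" using assms(3,4) LinfV_iff[of V] by blast
  show ?thesis
  proof (rule Bochner_Integration.integrable_bound[where f="\<lambda>x. N * V x"])
    show "integrable M (\<lambda>x. N * V x)" using assms(1) by simp
    show "\<phi> \<in> borel_measurable M"
      by (subst measurable_cong_sets[OF assms(2) refl]) (rule LinfV_measurable[OF assms(4)])
    show "AE x in M. norm (\<phi> x) \<le> norm (N * V x)" using N by (auto intro: order_trans[OF _ abs_ge_self])
  qed
qed

lemma geometric_increments_tail:
  fixes s :: "nat \<Rightarrow> real"
  assumes d: "\<And>k. \<bar>s (Suc k) - s k\<bar> \<le> B * a^k" and a: "0 < a" "a < 1"
  shows "\<bar>s (k + m) - s k\<bar> \<le> B * (a^k - a^(k+m)) / (1 - a)"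
proof (induction m)
  case 0 then show ?case by simp
next
  case (Suc m)
  have "\<bar>s (k + Suc m) - s k\<bar> \<le> \<bar>s (k + m) - s k\<bar> + \<bar>s (Suc (k+m)) - s (k+m)\<bar>" by simp
  also have "\<dots> \<le> B * (a^k - a^(k+m)) / (1 - a) + B * a^(k+m)" using Suc d[of "k+m"] by linarith
  also have "\<dots> = B * (a^k - a^(k + Suc m)) / (1 - a)" using a by (simp add: field_simps)
  finally show ?case .
qed

lemma geometric_increments_convergent:
  fixes s :: "nat \<Rightarrow> real"
  assumes d: "\<And>k. \<bar>s (Suc k) - s k\<bar> \<le> B * a^k" and a: "0 < a" "a < 1"
  shows "convergent s" "\<And>k. \<bar>lim s - s k\<bar> \<le> B * a^k / (1 - a)"
proof -
  have B: "0 \<le> B" using d[of 0] by simp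
  have tail: "\<bar>s m - s k\<bar> \<le> B * a^k / (1 - a)" if "k \<le> m" for k m
  proof -
    obtain j where m: "m = k + j" using \<open>k \<le> m\<close> le_Suc_ex by blast
    have "\<bar>s m - s k\<bar> \<le> B * (a^k - a^(k+j)) / (1 - a)"
      unfolding m by (rule geometric_increments_tail[OF d a])
    also have "\<dots> \<le> B * a^k / (1 - a)" using a B by (intro divide_right_mono mult_left_mono) auto
    finally show ?thesis .
  qed
  have lim0: "(\<lambda>k. B * a^k / (1 - a)) \<longlonglongrightarrow> 0"
    using a by (intro tendsto_eq_intros LIMSEQ_power_zero) auto
  show "convergent s"
    unfolding Cauchy_convergent_iff[symmetric]
  proof (rule CauchyI)
    fix e :: real assume "0 < e"
    with lim0 obtain M where M: "\<And>k. k \<ge> M \<Longrightarrow> \<bar>B * a^k / (1 - a)\<bar> < e/2"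
      unfolding LIMSEQ_def dist_real_def by (metis half_gt_zero diff_zero)
    show "\<exists>M. \<forall>m\<ge>M. \<forall>n\<ge>M. norm (s m - s n) < e"
    proof (intro exI allI impI)
      fix m n assume "M \<le> m" "M \<le> n"
      then have "\<bar>s m - s M\<bar> \<le> B * a^M / (1 - a)" "\<bar>s n - s M\<bar> \<le> B * a^M / (1 - a)" using tail by auto
      moreover have "B * a^M / (1 - a) < e/2" using M[of M] by (meson abs_less_iff le_refl)
      ultimately show "norm (s m - s n) < e" unfolding real_norm_def by linarith
    qed
  qed
  then have "(\<lambda>m. \<bar>s m - s k\<bar>) \<longlonglongrightarrow> \<bar>lim s - s k\<bar>" for k
    by (intro tendsto_intros) (simp add: convergent_LIMSEQ_iff)
  then show "\<bar>lim s - s k\<bar> \<le> B * a^k / (1 - a)" for k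
    by (rule Lim_bounded[where M=k]) (use tail in auto)
qed

lemma prob_space_integral_abs_le:
  fixes M :: "'a::topological_space measure" and B :: real
  assumes "prob_space M" "sets M = sets borel" "\<psi> \<in> borel_measurable borel" "\<And>x. \<bar>\<psi> x\<bar> \<le> B"
  shows "integrable M \<psi>" "\<bar>\<integral>x. \<psi> x \<partial>M\<bar> \<le> B"
proof -
  interpret prob_space M by fact
  have m: "\<psi> \<in> borel_measurable M" by (subst measurable_cong_sets[OF assms(2) refl]) (rule assms(3))
  show i: "integrable M \<psi>" by (rule integrable_const_bound[where B=B]) (use assms(4) m in auto)
  have "\<bar>\<integral>x. \<psi> x \<partial>M\<bar> \<le> (\<integral>x. \<bar>\<psi> x\<bar> \<partial>M)" by (rule integral_abs_bound)
  also have "\<dots> \<le> (\<integral>x. B \<partial>M)" using i assms(4) by (intro integral_mono) auto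
  also have "\<dots> = B" by (simp add: prob_space)
  finally show "\<bar>\<integral>x. \<psi> x \<partial>M\<bar> \<le> B" .
qed

lemma bounded_range_indicator_sum:
  "bounded (range (\<lambda>x. \<Sum>j\<in>S. c j * indicator (E j) x :: real))"
proof -
  have "\<bar>\<Sum>j\<in>S. c j * indicator (E j) x\<bar> \<le> (\<Sum>j\<in>S. \<bar>c j\<bar>)" for x
    by (rule order_trans[OF sum_abs sum_mono]) (auto simp: abs_mult indicator_def)
  then show ?thesis unfolding bounded_range_iff by blast
qed

lemma linear_functional_zero_on_step_functions:
  fixes \<Delta> :: "('a::topological_space \<Rightarrow> real) \<Rightarrow> real" and E :: "'i \<Rightarrow> 'a set"
  assumes add: "\<And>f g. f \<in> borel_measurable borel \<Longrightarrow> g \<in> borel_measurable borel \<Longrightarrow>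
        bounded (range f) \<Longrightarrow> bounded (range g) \<Longrightarrow> \<Delta> (\<lambda>x. f x + g x) = \<Delta> f + \<Delta> g"
    and scale: "\<And>f c. f \<in> borel_measurable borel \<Longrightarrow> bounded (range f) \<Longrightarrow> \<Delta> (\<lambda>x. c * f x) = c * \<Delta> f"
    and indicator: "\<And>A. A \<in> sets borel \<Longrightarrow> \<Delta> (indicator A) = 0"
    and S: "finite S" "\<And>j. j \<in> S \<Longrightarrow> E j \<in> sets borel"
  shows "\<Delta> (\<lambda>x. \<Sum>j\<in>S. c j * indicator (E j) x) = 0"
  using S
proof (induction S rule: finite_induct)
  case empty
  have "\<Delta> (\<lambda>x. 0 * 0) = 0 * \<Delta> (\<lambda>x. 0)" by (rule scale) auto
  then show ?case by simp
next
  case (insert j S)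
  have Ej: "E j \<in> sets borel" and ES: "\<And>i. i \<in> S \<Longrightarrow> E i \<in> sets borel" using insert.prems by auto
  have ind: "bounded (range (\<lambda>x. a * indicator (E j) x :: real))" for a
    unfolding bounded_range_iff by (rule exI[of _ "\<bar>a\<bar>"]) (simp add: abs_mult indicator_def)
  have "\<Delta> (\<lambda>x. c j * indicator (E j) x + (\<Sum>j\<in>S. c j * indicator (E j) x))
      = \<Delta> (\<lambda>x. c j * indicator (E j) x) + \<Delta> (\<lambda>x. \<Sum>j\<in>S. c j * indicator (E j) x)"
    using ind bounded_range_indicator_sum[where S=S and c=c and E=E] Ej ES by (intro add) auto
  also have "\<dots> = 0"
    using scale[of "indicator (E j)" "c j"] ind[of 1] indicator[OF Ej] insert.IH[OF ES] Ej by simp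
  finally show ?case by (simp only: sum.insert[OF insert.hyps])
qed

lemma step_function_approx:
  fixes \<psi> :: "'a::topological_space \<Rightarrow> real"
  assumes \<psi>: "\<psi> \<in> borel_measurable borel" "\<And>x. \<bar>\<psi> x\<bar> \<le> B" and m: "0 < m"
  obtains S :: "int set" and E c where "finite S" "\<And>j. E j \<in> sets borel"
    "\<And>x. \<bar>\<psi> x - (\<Sum>j\<in>S. c j * indicator (E j) x)\<bar> \<le> 1 / m"
proof -
  define M where "M = \<lceil>m * \<bar>B\<bar>\<rceil> + 1"
  define E where "E j = {y. real_of_int j \<le> m * \<psi> y \<and> m * \<psi> y < real_of_int j + 1}" for j :: int
  have E: "E j \<in> sets borel" for j
  proof -
    have "E j = (\<lambda>y. m * \<psi> y) -` {real_of_int j ..< real_of_int j + 1}" unfolding E_def by auto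
    also have "\<dots> \<in> sets borel"
      using measurable_sets_borel[of "\<lambda>y. m * \<psi> y" borel] \<psi>(1) by simp
    finally show ?thesis .
  qed
  have floor_in: "\<lfloor>m * \<psi> x\<rfloor> \<in> {-M..M}" for x
  proof -
    have "\<bar>m * \<psi> x\<bar> \<le> m * \<bar>B\<bar>"
      using \<psi>(2)[of x] m by (simp add: abs_mult mult_left_mono order_trans[OF _ abs_ge_self])
    moreover have "m * \<bar>B\<bar> \<le> real_of_int \<lceil>m * \<bar>B\<bar>\<rceil>" by (rule le_of_int_ceiling)
    ultimately show ?thesis unfolding M_def by (auto simp: abs_le_iff) linarith+
  qed
  have step: "(\<Sum>j\<in>{-M..M}. real_of_int j / m * indicator (E j) x) = real_of_int \<lfloor>m * \<psi> x\<rfloor> / m" for x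
  proof -
    have "indicator (E j) x = (if \<lfloor>m * \<psi> x\<rfloor> = j then 1 else (0::real))" for j
      unfolding E_def indicator_def by (auto simp: floor_eq_iff)
    then have "(\<Sum>j\<in>{-M..M}. real_of_int j / m * indicator (E j) x)
        = (\<Sum>j\<in>{-M..M}. if j = \<lfloor>m * \<psi> x\<rfloor> then real_of_int j / m else 0)"
      by (intro sum.cong) auto
    then show ?thesis using floor_in[of x] by (simp add: sum.delta')
  qed
  have close: "\<bar>\<psi> x - real_of_int \<lfloor>m * \<psi> x\<rfloor> / m\<bar> \<le> 1 / m" for x
  proof -
    have "0 \<le> m * \<psi> x - real_of_int \<lfloor>m * \<psi> x\<rfloor>" "m * \<psi> x - real_of_int \<lfloor>m * \<psi> x\<rfloor> \<le> 1" by linarith+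
    moreover have "\<psi> x - real_of_int \<lfloor>m * \<psi> x\<rfloor> / m = (m * \<psi> x - real_of_int \<lfloor>m * \<psi> x\<rfloor>) / m"
      using m by (simp add: field_simps)
    ultimately show ?thesis using m by (simp add: divide_right_mono)
  qed
  show ?thesis
  proof (rule that[of "{-M..M}" E "\<lambda>j. real_of_int j / m"])
    show "\<bar>\<psi> x - (\<Sum>j\<in>{-M..M}. real_of_int j / m * indicator (E j) x)\<bar> \<le> 1 / m" for x
      using close[of x] step[of x] by simp
    show "finite {-M..M}" by simp
    show "E j \<in> sets borel" for j by (rule E)
  qed
qed

lemma linear_functional_zero_on_bounded:
  fixes \<Delta> :: "('a::topological_space \<Rightarrow> real) \<Rightarrow> real"
  assumes add: "\<And>f g. f \<in> borel_measurable borel \<Longrightarrow> g \<in> borel_measurable borel \<Longrightarrow>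
        bounded (range f) \<Longrightarrow> bounded (range g) \<Longrightarrow> \<Delta> (\<lambda>x. f x + g x) = \<Delta> f + \<Delta> g"
    and scale: "\<And>f c. f \<in> borel_measurable borel \<Longrightarrow> bounded (range f) \<Longrightarrow> \<Delta> (\<lambda>x. c * f x) = c * \<Delta> f"
    and bound: "\<And>f B. f \<in> borel_measurable borel \<Longrightarrow> (\<And>x. \<bar>f x\<bar> \<le> B) \<Longrightarrow> \<bar>\<Delta> f\<bar> \<le> C * B"
    and indicator: "\<And>A. A \<in> sets borel \<Longrightarrow> \<Delta> (indicator A) = 0"
    and \<psi>: "\<psi> \<in> borel_measurable borel" "\<And>x. \<bar>\<psi> x\<bar> \<le> B"
  shows "\<Delta> \<psi> = 0"
proof -
  have approx: "\<bar>\<Delta> \<psi>\<bar> \<le> C / m" if m: "0 < m" for m :: real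
  proof -
    obtain S :: "int set" and E c where S: "finite S" "\<And>j. E j \<in> sets borel"
      and close: "\<And>x. \<bar>\<psi> x - (\<Sum>j\<in>S. c j * indicator (E j) x)\<bar> \<le> 1 / m"
      using step_function_approx[OF \<psi> m] by blast
    define s where "s x = (\<Sum>j\<in>S. c j * indicator (E j) x)" for x
    have s_meas: "s \<in> borel_measurable borel" unfolding s_def[abs_def] using S(2) by simp
    have d_meas: "(\<lambda>x. \<psi> x - s x) \<in> borel_measurable borel" using s_meas \<psi>(1) by simp
    have d_le: "\<bar>\<psi> x - s x\<bar> \<le> 1 / m" for x using close[of x] unfolding s_def .
    then have d_bounded: "bounded (range (\<lambda>x. \<psi> x - s x))" unfolding bounded_range_iff by blast
    have s_bounded: "bounded (range s)" unfolding s_def[abs_def] by (rule bounded_range_indicator_sum)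
    have "\<Delta> (\<lambda>x. s x + (\<psi> x - s x)) = \<Delta> s + \<Delta> (\<lambda>x. \<psi> x - s x)"
      by (rule add[OF s_meas d_meas s_bounded d_bounded])
    then have "\<Delta> \<psi> = \<Delta> s + \<Delta> (\<lambda>x. \<psi> x - s x)" by simp
    moreover have "\<Delta> s = 0"
      unfolding s_def[abs_def] by (rule linear_functional_zero_on_step_functions[OF add scale indicator S])
    moreover have "\<bar>\<Delta> (\<lambda>x. \<psi> x - s x)\<bar> \<le> C * (1 / m)" by (rule bound[OF d_meas d_le])
    ultimately show ?thesis by simp
  qed
  show ?thesis
  proof (rule ccontr)
    assume "\<Delta> \<psi> \<noteq> 0"
    then have pos: "0 < \<bar>\<Delta> \<psi>\<bar>" by simp
    with approx[of 1] have C: "0 < C" by simp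
    define m where "m = 2 * C / \<bar>\<Delta> \<psi>\<bar>"
    have "0 < m" unfolding m_def using pos C by simp
    moreover have "C / m = \<bar>\<Delta> \<psi>\<bar> / 2" unfolding m_def using pos C by (simp add: field_simps)
    ultimately show False using approx[of m] pos by simp
  qed
qed

section \<open>Harris' theorem\<close>

text \<open>\<open>P_tendsto\<close> stands in for dominated convergence, which an abstract operator lacks.\<close>
locale harris =
  fixes P :: "('a::topological_space \<Rightarrow> real) \<Rightarrow> 'a \<Rightarrow> real" and V :: "'a \<Rightarrow> real"
    and \<gamma> K R \<epsilon> :: real and \<nu> :: "('a \<Rightarrow> real) \<Rightarrow> real"
  assumes V_meas: "V \<in> borel_measurable borel" and V_ge1: "\<And>x. 1 \<le> V x"
    and P_meas: "\<And>\<phi>. \<phi> \<in> LinfV V \<Longrightarrow> P \<phi> \<in> borel_measurable borel"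
    and P_add: "\<And>\<phi> \<psi>. \<phi> \<in> LinfV V \<Longrightarrow> \<psi> \<in> LinfV V \<Longrightarrow> P (\<lambda>x. \<phi> x + \<psi> x) = (\<lambda>x. P \<phi> x + P \<psi> x)"
    and P_scale: "\<And>\<phi> c. \<phi> \<in> LinfV V \<Longrightarrow> P (\<lambda>x. c * \<phi> x) = (\<lambda>x. c * P \<phi> x)"
    and P_const: "\<And>c. P (\<lambda>_. c) = (\<lambda>_. c)"
    and P_mono: "\<And>\<phi> \<psi> x. \<phi> \<in> LinfV V \<Longrightarrow> \<psi> \<in> LinfV V \<Longrightarrow> (\<And>y. \<phi> y \<le> \<psi> y) \<Longrightarrow> P \<phi> x \<le> P \<psi> x"
    and P_tendsto: "\<And>\<phi>s \<phi> N x. (\<And>n. \<phi>s n \<in> LinfV V) \<Longrightarrow> \<phi> \<in> LinfV V \<Longrightarrow> (\<And>n y. \<bar>\<phi>s n y\<bar> \<le> N * V y)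
        \<Longrightarrow> (\<And>y. (\<lambda>n. \<phi>s n y) \<longlonglongrightarrow> \<phi> y) \<Longrightarrow> (\<lambda>n. P (\<phi>s n) x) \<longlonglongrightarrow> P \<phi> x"
    and drift: "\<And>x. P V x \<le> \<gamma> * V x + K"
    and \<gamma>_ge: "0 \<le> \<gamma>" and \<gamma>_le: "\<gamma> \<le> 1/4" and K_ge: "0 \<le> K" and R_gt: "8 * K < R"
    and \<epsilon>_pos: "0 < \<epsilon>" and \<epsilon>_le: "\<epsilon> \<le> 1"
    and \<nu>_add: "\<And>\<phi> \<psi>. \<phi> \<in> LinfV V \<Longrightarrow> \<psi> \<in> LinfV V \<Longrightarrow> \<nu> (\<lambda>x. \<phi> x + \<psi> x) = \<nu> \<phi> + \<nu> \<psi>"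
    and \<nu>_scale: "\<And>\<phi> c. \<phi> \<in> LinfV V \<Longrightarrow> \<nu> (\<lambda>x. c * \<phi> x) = c * \<nu> \<phi>"
    and \<nu>_one: "\<nu> (\<lambda>_. 1) = 1" and \<nu>_V: "0 \<le> \<nu> V"
    and minor: "\<And>\<psi> x. \<psi> \<in> LinfV V \<Longrightarrow> (\<And>y. 0 \<le> \<psi> y) \<Longrightarrow> V x \<le> R \<Longrightarrow> \<epsilon> * \<nu> \<psi> \<le> P \<psi> x"
begin

lemma V_pos: "0 < V x" using V_ge1[of x] by linarith

lemma LinfV_iff_dominated: "\<phi> \<in> LinfV V \<longleftrightarrow> \<phi> \<in> borel_measurable borel \<and> (\<exists>N. \<forall>x. \<bar>\<phi> x\<bar> \<le> N * V x)"
  by (rule LinfV_iff) (rule V_pos)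

lemma LinfV_I: "\<phi> \<in> borel_measurable borel \<Longrightarrow> (\<And>x. \<bar>\<phi> x\<bar> \<le> N * V x) \<Longrightarrow> \<phi> \<in> LinfV V"
  unfolding LinfV_iff_dominated by blast

lemma LinfV_E:
  assumes "\<phi> \<in> LinfV V"
  obtains N where "0 \<le> N" "\<And>x. \<bar>\<phi> x\<bar> \<le> N * V x" "\<phi> \<in> borel_measurable borel"
proof -
  from assms obtain N where N: "\<And>x. \<bar>\<phi> x\<bar> \<le> N * V x" and m: "\<phi> \<in> borel_measurable borel"
    unfolding LinfV_iff_dominated by blast
  have "0 \<le> N * V undefined" using N[of undefined] by linarith
  then have "0 \<le> N" using V_pos[of undefined] by (simp add: zero_le_mult_iff)
  with N m that show ?thesis by blast
qed

lemma LinfV_bounded: "\<phi> \<in> borel_measurable borel \<Longrightarrow> (\<And>x. \<bar>\<phi> x\<bar> \<le> B) \<Longrightarrow> \<phi> \<in> LinfV V"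
proof (rule LinfV_I[where N="\<bar>B\<bar>"])
  fix x assume "\<And>x. \<bar>\<phi> x\<bar> \<le> B"
  then show "\<bar>\<phi> x\<bar> \<le> \<bar>B\<bar> * V x" using V_ge1[of x]
    by (smt (verit, best) mult_le_cancel_left1)
qed

lemma LinfV_const[simp]: "(\<lambda>_. c) \<in> LinfV V"
  by (rule LinfV_bounded) auto

lemma LinfV_V[simp]: "V \<in> LinfV V"
  by (rule LinfV_I[where N=1]) (use V_meas V_pos in \<open>auto simp: less_imp_le\<close>)

lemma LinfV_indicator[simp]: "A \<in> sets borel \<Longrightarrow> indicator A \<in> LinfV V"
  by (rule LinfV_bounded[where B=1]) (auto simp: indicator_def)

lemma LinfV_add[simp]:
  assumes "\<phi> \<in> LinfV V" "\<psi> \<in> LinfV V"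
  shows "(\<lambda>x. \<phi> x + \<psi> x) \<in> LinfV V"
proof -
  obtain N1 where N1: "\<And>x. \<bar>\<phi> x\<bar> \<le> N1 * V x" "\<phi> \<in> borel_measurable borel" using LinfV_E[OF assms(1)] by blast
  obtain N2 where N2: "\<And>x. \<bar>\<psi> x\<bar> \<le> N2 * V x" "\<psi> \<in> borel_measurable borel" using LinfV_E[OF assms(2)] by blast
  show ?thesis
  proof (rule LinfV_I[where N="N1 + N2"])
    fix x show "\<bar>\<phi> x + \<psi> x\<bar> \<le> (N1 + N2) * V x"
      using N1(1)[of x] N2(1)[of x] abs_triangle_ineq[of "\<phi> x" "\<psi> x"] by (simp add: algebra_simps)
  qed (use N1 N2 in simp)
qed

lemma LinfV_scale[simp]:
  assumes "\<phi> \<in> LinfV V"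
  shows "(\<lambda>x. c * \<phi> x) \<in> LinfV V"
proof -
  obtain N where N: "\<And>x. \<bar>\<phi> x\<bar> \<le> N * V x" "\<phi> \<in> borel_measurable borel" using LinfV_E[OF assms] by blast
  show ?thesis
  proof (rule LinfV_I[where N="\<bar>c\<bar> * N"])
    fix x show "\<bar>c * \<phi> x\<bar> \<le> (\<bar>c\<bar> * N) * V x" using N(1)[of x] by (simp add: abs_mult mult.assoc mult_left_mono)
  qed (use N in simp)
qed

lemma LinfV_minus[simp]: "\<phi> \<in> LinfV V \<Longrightarrow> (\<lambda>x. - \<phi> x) \<in> LinfV V"
  using LinfV_scale[of \<phi> "-1"] by simp

lemma LinfV_diff[simp]: "\<phi> \<in> LinfV V \<Longrightarrow> \<psi> \<in> LinfV V \<Longrightarrow> (\<lambda>x. \<phi> x - \<psi> x) \<in> LinfV V"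
  using LinfV_add[of \<phi> "\<lambda>x. - \<psi> x"] by simp

lemma LinfV_of_bounded: "\<psi> \<in> borel_measurable borel \<Longrightarrow> bounded (range \<psi>) \<Longrightarrow> \<psi> \<in> LinfV V"
  unfolding bounded_range_iff using LinfV_bounded by blast

lemma P_minus: "\<phi> \<in> LinfV V \<Longrightarrow> P (\<lambda>x. - \<phi> x) = (\<lambda>x. - P \<phi> x)"
  using P_scale[of \<phi> "-1"] by simp

lemma P_diff: "\<phi> \<in> LinfV V \<Longrightarrow> \<psi> \<in> LinfV V \<Longrightarrow> P (\<lambda>x. \<phi> x - \<psi> x) = (\<lambda>x. P \<phi> x - P \<psi> x)"
  using P_add[of \<phi> "\<lambda>x. - \<psi> x"] P_minus[of \<psi>] by simp

lemma P_affine: "\<phi> \<in> LinfV V \<Longrightarrow> P (\<lambda>x. a + b * \<phi> x) = (\<lambda>x. a + b * P \<phi> x)"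
  using P_add[of "\<lambda>_. a" "\<lambda>x. b * \<phi> x"] P_scale[of \<phi> b] P_const[of a] by simp

lemma \<nu>_affine: "\<phi> \<in> LinfV V \<Longrightarrow> \<nu> (\<lambda>x. a + b * \<phi> x) = a + b * \<nu> \<phi>"
  using \<nu>_add[of "\<lambda>_. a" "\<lambda>x. b * \<phi> x"] \<nu>_scale[of \<phi> b] \<nu>_scale[of "\<lambda>_. 1" a] \<nu>_one by simp

lemma P_abs_le_PV:
  assumes "\<phi> \<in> LinfV V" "\<And>x. \<bar>\<phi> x\<bar> \<le> N * V x"
  shows "\<bar>P \<phi> x\<bar> \<le> N * P V x"
proof -
  have b: "- (N * V y) \<le> \<phi> y" "\<phi> y \<le> N * V y" for y using assms(2)[of y] by linarith+
  have "P \<phi> x \<le> P (\<lambda>y. N * V y) x" by (rule P_mono) (use assms b in auto)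
  moreover have "P (\<lambda>y. - (N * V y)) x \<le> P \<phi> x" by (rule P_mono) (use assms b in auto)
  ultimately show ?thesis using P_scale[of V N] P_minus[of "\<lambda>y. N * V y"] by auto
qed

lemma P_abs_le_const:
  assumes "\<phi> \<in> LinfV V" "\<And>y. \<bar>\<phi> y\<bar> \<le> B"
  shows "\<bar>P \<phi> x\<bar> \<le> B"
proof -
  have b: "\<phi> y \<le> B" "-B \<le> \<phi> y" for y using assms(2)[of y] by linarith+
  have "P \<phi> x \<le> P (\<lambda>_. B) x" using b assms by (intro P_mono) auto
  moreover have "P (\<lambda>_. -B) x \<le> P \<phi> x" using b assms by (intro P_mono) auto
  ultimately show ?thesis by (simp add: P_const)
qed

lemma PV_le: "P V x \<le> (\<gamma> + K) * V x"
  using drift[of x] V_ge1[of x] K_ge by (smt (verit) distrib_right mult_le_cancel_left1)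

lemma LinfV_P[simp]:
  assumes "\<phi> \<in> LinfV V"
  shows "P \<phi> \<in> LinfV V"
proof -
  obtain N where N: "0 \<le> N" "\<And>x. \<bar>\<phi> x\<bar> \<le> N * V x" using LinfV_E[OF assms] by blast
  show ?thesis
  proof (rule LinfV_I[where N="N * (\<gamma> + K)"])
    fix x have "\<bar>P \<phi> x\<bar> \<le> N * P V x" by (rule P_abs_le_PV[OF assms N(2)])
    also have "\<dots> \<le> N * ((\<gamma> + K) * V x)" using PV_le N(1) by (simp add: mult_left_mono)
    finally show "\<bar>P \<phi> x\<bar> \<le> N * (\<gamma> + K) * V x" by (simp add: mult.assoc)
  qed (rule P_meas[OF assms])
qed

lemma LinfV_Pk[simp]: "\<phi> \<in> LinfV V \<Longrightarrow> (P ^^ k) \<phi> \<in> LinfV V"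
  by (induction k) auto

lemma Pk_const: "(P ^^ k) (\<lambda>_. c) = (\<lambda>_. c)"
  by (induction k) (auto simp: P_const)

lemma Pk_add: "\<phi> \<in> LinfV V \<Longrightarrow> \<psi> \<in> LinfV V \<Longrightarrow> (P ^^ k) (\<lambda>x. \<phi> x + \<psi> x) = (\<lambda>x. (P ^^ k) \<phi> x + (P ^^ k) \<psi> x)"
  by (induction k) (auto simp: P_add)

lemma Pk_scale: "\<phi> \<in> LinfV V \<Longrightarrow> (P ^^ k) (\<lambda>x. c * \<phi> x) = (\<lambda>x. c * (P ^^ k) \<phi> x)"
  by (induction k) (auto simp: P_scale)

lemma Pk_mono: "\<phi> \<in> LinfV V \<Longrightarrow> \<psi> \<in> LinfV V \<Longrightarrow> (\<And>y. \<phi> y \<le> \<psi> y) \<Longrightarrow> (P ^^ k) \<phi> x \<le> (P ^^ k) \<psi> x"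
  by (induction k arbitrary: x) (simp_all add: P_mono)

lemma Pk_abs_le_const: "\<psi> \<in> LinfV V \<Longrightarrow> (\<And>y. \<bar>\<psi> y\<bar> \<le> B) \<Longrightarrow> \<bar>(P ^^ k) \<psi> x\<bar> \<le> B"
proof (induction k arbitrary: x)
  case (Suc k) then show ?case using P_abs_le_const[OF LinfV_Pk[OF Suc.prems(1)]] by simp
qed simp

lemma Pk_abs_le:
  assumes "\<phi> \<in> LinfV V" "\<And>y. \<bar>\<phi> y\<bar> \<le> N * V y" "0 \<le> N"
  shows "\<bar>(P ^^ k) \<phi> x\<bar> \<le> N * (\<gamma> + K)^k * V x"
  using assms(2,3)
proof (induction k arbitrary: x N)
  case (Suc k)
  have IH: "\<And>y. \<bar>(P ^^ k) \<phi> y\<bar> \<le> (N * (\<gamma> + K)^k) * V y" using Suc by blast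
  have "\<bar>P ((P ^^ k) \<phi>) x\<bar> \<le> (N * (\<gamma> + K)^k) * P V x" by (rule P_abs_le_PV[OF LinfV_Pk[OF assms(1)] IH])
  also have "\<dots> \<le> (N * (\<gamma> + K)^k) * ((\<gamma> + K) * V x)" using PV_le Suc.prems(2) \<gamma>_ge K_ge
    by (intro mult_left_mono) auto
  finally show ?case by (simp add: mult_ac)
qed simp

lemma Pk_tendsto:
  assumes "\<And>n. \<phi>s n \<in> LinfV V" "\<phi> \<in> LinfV V" "\<And>n y. \<bar>\<phi>s n y\<bar> \<le> N * V y" "0 \<le> N"
    "\<And>y. (\<lambda>n. \<phi>s n y) \<longlonglongrightarrow> \<phi> y"
  shows "(\<lambda>n. (P ^^ k) (\<phi>s n) x) \<longlonglongrightarrow> (P ^^ k) \<phi> x"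
proof (induction k arbitrary: x)
  case 0 then show ?case using assms(5) by simp
next
  case (Suc k)
  show ?case
    using P_tendsto[of "\<lambda>n. (P ^^ k) (\<phi>s n)" "(P ^^ k) \<phi>" "N * (\<gamma> + K)^k" x]
      assms(1,2) Pk_abs_le[OF assms(1) assms(3) assms(4)] Suc by simp
qed

definition "\<beta> = \<epsilon> / (\<gamma> * R + 2 * K + 1)"
definition "rate = max (1 - \<epsilon> / 2) ((4 + \<beta> * R) / (4 + 2 * \<beta> * R))"

lemma R_pos: "0 < R" using R_gt K_ge by linarith

lemma \<beta>_pos: "0 < \<beta>"
proof -
  have "0 \<le> \<gamma> * R" using \<gamma>_ge R_pos by simp
  then show ?thesis unfolding \<beta>_def using \<epsilon>_pos K_ge by (intro divide_pos_pos) auto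
qed

lemma \<beta>_small: "\<beta> * (\<gamma> * R + 2 * K) \<le> \<epsilon>"
proof -
  have d: "0 < \<gamma> * R + 2 * K + 1" using \<gamma>_ge R_pos K_ge by (smt (verit) mult_nonneg_nonneg)
  have "\<beta> * (\<gamma> * R + 2 * K) = \<epsilon> * ((\<gamma> * R + 2 * K) / (\<gamma> * R + 2 * K + 1))" unfolding \<beta>_def by simp
  also have "\<dots> \<le> \<epsilon> * 1" using d \<epsilon>_pos by (intro mult_left_mono) auto
  finally show ?thesis by simp
qed

lemma rate_pos: "0 < rate"
  unfolding rate_def using \<beta>_pos R_pos by (smt (verit) divide_pos_pos mult_pos_pos)

lemma rate_lt1: "rate < 1"
proof -
  have "(4 + \<beta> * R) / (4 + 2 * \<beta> * R) < 1"
    using \<beta>_pos R_pos by (simp add: divide_less_eq) (smt (verit) mult_pos_pos)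
  then show ?thesis unfolding rate_def using \<epsilon>_pos by auto
qed

lemma rate_far:
  assumes u: "R \<le> u" and r: "0 \<le> r"
  shows "r * (2 + \<beta> * (\<gamma> * u + 2 * K)) \<le> rate * r * (2 + \<beta> * u)"
proof -
  have "\<gamma> * u \<le> u / 4" using \<gamma>_le \<gamma>_ge u R_pos by (intro order_trans[OF mult_right_mono[OF \<gamma>_le]]) auto
  moreover have "2 * K \<le> u / 4" using R_gt u by linarith
  ultimately have "\<beta> * (\<gamma> * u + 2 * K) \<le> \<beta> * (u / 2)" using \<beta>_pos by (intro mult_left_mono) auto
  then have 1: "2 + \<beta> * (\<gamma> * u + 2 * K) \<le> 2 + \<beta> * u / 2" by simp
  define q where "q = (4 + \<beta> * R) / (4 + 2 * \<beta> * R)"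
  have den: "0 < 4 + 2 * \<beta> * R" using \<beta>_pos R_pos by (smt (verit) mult_pos_pos)
  have "2 * \<beta> * R \<le> 2 * \<beta> * u" using \<beta>_pos u by simp
  then have "(2 + \<beta> * u / 2) * (4 + 2 * \<beta> * R) \<le> (4 + \<beta> * R) * (2 + \<beta> * u)"
    by (simp add: algebra_simps)
  then have 2: "2 + \<beta> * u / 2 \<le> q * (2 + \<beta> * u)" unfolding q_def using den by (simp add: field_simps)
  have "q * (2 + \<beta> * u) \<le> rate * (2 + \<beta> * u)"
    using \<beta>_pos u R_pos unfolding q_def rate_def by (intro mult_right_mono) auto
  with 1 2 have "2 + \<beta> * (\<gamma> * u + 2 * K) \<le> rate * (2 + \<beta> * u)" by linarith
  then show ?thesis using r by (simp add: mult_left_mono mult.assoc mult.left_commute)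
qed

lemma rate_near:
  assumes u: "u \<le> R" "0 \<le> u" and r: "0 \<le> r"
  shows "r * (2 - 2 * \<epsilon> + \<beta> * (\<gamma> * u + 2 * K)) \<le> rate * r * (2 + \<beta> * u)"
proof -
  have "\<beta> * (\<gamma> * u + 2 * K) \<le> \<beta> * (\<gamma> * R + 2 * K)"
    using \<beta>_pos \<gamma>_ge u by (intro mult_left_mono) (auto intro: mult_left_mono)
  with \<beta>_small have "2 - 2 * \<epsilon> + \<beta> * (\<gamma> * u + 2 * K) \<le> 2 - \<epsilon>" by linarith
  also have "\<dots> = (1 - \<epsilon> / 2) * 2" by (simp add: algebra_simps)
  also have "\<dots> \<le> rate * 2" unfolding rate_def by (intro mult_right_mono) auto
  also have "\<dots> \<le> rate * (2 + \<beta> * u)" using rate_pos \<beta>_pos u by simp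
  finally show ?thesis using r by (simp add: mult_left_mono mult.assoc mult.left_commute)
qed

text \<open>\<open>osc_le \<phi> r\<close> says that \<open>\<phi>\<close> is \<open>r\<close>-Lipschitz for the weighted distance
  \<open>d(x,y) = 2 + \<beta> V x + \<beta> V y\<close> (\<open>x \<noteq> y\<close>) of Hairer and Mattingly; \<open>P\<close> contracts this
  seminorm by the factor \<open>rate\<close>. Far from the sublevel set \<open>{V \<le> R}\<close> the drift gains,
  near it the minorization does.\<close>
definition "osc_le \<phi> r \<longleftrightarrow> (\<forall>x y. \<phi> x - \<phi> y \<le> r * (2 + \<beta> * V x + \<beta> * V y))"

lemma osc_le_nonneg: "osc_le \<phi> r \<Longrightarrow> 0 \<le> r"
proof -
  assume "osc_le \<phi> r"
  then have "\<phi> undefined - \<phi> undefined \<le> r * (2 + \<beta> * V undefined + \<beta> * V undefined)"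
    unfolding osc_le_def by blast
  then have "0 \<le> r * (2 + \<beta> * V undefined + \<beta> * V undefined)" by simp
  moreover have "0 < 2 + \<beta> * V undefined + \<beta> * V undefined" using \<beta>_pos V_pos by (smt (verit) mult_pos_pos)
  ultimately show "0 \<le> r" by (simp add: zero_le_mult_iff)
qed

lemma osc_le_of_abs_le:
  assumes "\<And>x. \<bar>\<phi> x - c\<bar> \<le> M * V x"
  shows "osc_le \<phi> (M / \<beta>)"
  unfolding osc_le_def
proof (intro allI)
  fix x y
  have "0 \<le> M * V x" using assms[of x] by linarith
  then have M: "0 \<le> M" using V_pos[of x] by (simp add: zero_le_mult_iff)
  have "\<phi> x - \<phi> y \<le> M * V x + M * V y" using assms[of x] assms[of y] by linarith
  also have "\<dots> = (M / \<beta>) * (\<beta> * V x + \<beta> * V y)" using \<beta>_pos by (simp add: field_simps)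
  also have "\<dots> \<le> (M / \<beta>) * (2 + \<beta> * V x + \<beta> * V y)" using M \<beta>_pos by (intro mult_left_mono) auto
  finally show "\<phi> x - \<phi> y \<le> M / \<beta> * (2 + \<beta> * V x + \<beta> * V y)" .
qed

lemma osc_le_exists:
  assumes "\<phi> \<in> LinfV V"
  obtains r where "osc_le \<phi> r"
proof -
  obtain N where "\<And>x. \<bar>\<phi> x\<bar> \<le> N * V x" using LinfV_E[OF assms] by blast
  then have "osc_le \<phi> (N / \<beta>)" by (intro osc_le_of_abs_le[where c=0]) simp
  then show ?thesis using that by blast
qed

lemma osc_le_recentre:
  assumes "osc_le \<phi> r"
  obtains c where "\<And>z. \<phi> z - c \<le> r + (r * \<beta>) * V z" "\<And>z. - r + (- r * \<beta>) * V z \<le> \<phi> z - c"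
proof -
  have pw: "\<phi> z - r * (1 + \<beta> * V z) \<le> \<phi> w + r * (1 + \<beta> * V w)" for z w
  proof -
    have "\<phi> z - \<phi> w \<le> r * (2 + \<beta> * V z + \<beta> * V w)" using assms unfolding osc_le_def by blast
    then show ?thesis unfolding ring_distribs by linarith
  qed
  define c where "c = (SUP z. \<phi> z - r * (1 + \<beta> * V z))"
  have bdd: "bdd_above (range (\<lambda>z. \<phi> z - r * (1 + \<beta> * V z)))"
    using pw by (intro bdd_aboveI2) blast
  have "\<phi> z - r * (1 + \<beta> * V z) \<le> c" for z unfolding c_def by (rule cSUP_upper[OF UNIV_I bdd])
  moreover have "c \<le> \<phi> w + r * (1 + \<beta> * V w)" for w unfolding c_def by (rule cSUP_least) (use pw in auto)
  ultimately show ?thesis by (intro that[of c]) (simp_all add: algebra_simps)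
qed

lemma P_diff_le_far:
  assumes \<psi>: "\<psi> \<in> LinfV V" and b: "\<And>z. \<bar>\<psi> z\<bar> \<le> r + r * \<beta> * V z"
  shows "P \<psi> x - P \<psi> y \<le> 2 * r + r * \<beta> * (P V x + P V y)"
proof -
  have le: "\<psi> z \<le> r + r * \<beta> * V z" "- r + - r * \<beta> * V z \<le> \<psi> z" for z using b[of z] by linarith+
  have "P \<psi> x \<le> P (\<lambda>z. r + r * \<beta> * V z) x" by (rule P_mono) (use \<psi> le in auto)
  moreover have "P (\<lambda>z. - r + - r * \<beta> * V z) y \<le> P \<psi> y" by (rule P_mono) (use \<psi> le in auto)
  moreover have "P (\<lambda>z. r + r * \<beta> * V z) x = r + r * \<beta> * P V x"
    and "P (\<lambda>z. - r + - r * \<beta> * V z) y = - r + - r * \<beta> * P V y"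
    by (rule fun_cong[OF P_affine[OF LinfV_V]])+
  ultimately show ?thesis by (simp add: algebra_simps)
qed

text \<open>The coupling step: \<open>b - \<psi>\<close> and \<open>b + \<psi>\<close> are nonnegative and their \<open>\<nu>\<close>-masses add
  up to \<open>2 \<nu> b \<ge> 2 r\<close>, so the minorization removes \<open>2 \<epsilon> r\<close> from the bound.\<close>
lemma P_diff_le_near:
  assumes \<psi>: "\<psi> \<in> LinfV V" and r: "0 \<le> r" and b: "\<And>z. \<bar>\<psi> z\<bar> \<le> r + r * \<beta> * V z"
    and Vx: "V x \<le> R" and Vy: "V y \<le> R"
  shows "P \<psi> x - P \<psi> y \<le> 2 * r + r * \<beta> * (P V x + P V y) - 2 * \<epsilon> * r"
proof -
  define \<psi>1 where "\<psi>1 = (\<lambda>z. r + r * \<beta> * V z - \<psi> z)"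
  define \<psi>2 where "\<psi>2 = (\<lambda>z. r + r * \<beta> * V z + \<psi> z)"
  have \<psi>12: "\<psi>1 \<in> LinfV V" "\<psi>2 \<in> LinfV V" unfolding \<psi>1_def \<psi>2_def using \<psi> by simp_all
  have le: "\<psi> z \<le> r + r * \<beta> * V z" "0 \<le> r + r * \<beta> * V z + \<psi> z" for z using b[of z] by linarith+
  have m1: "\<epsilon> * \<nu> \<psi>1 \<le> P \<psi>1 x" by (rule minor[OF \<psi>12(1) _ Vx]) (simp add: \<psi>1_def le)
  have m2: "\<epsilon> * \<nu> \<psi>2 \<le> P \<psi>2 y" by (rule minor[OF \<psi>12(2) _ Vy]) (simp add: \<psi>2_def le)
  have P1: "P \<psi>1 x = r + r * \<beta> * P V x - P \<psi> x"
    unfolding \<psi>1_def using P_diff[OF _ \<psi>, of "\<lambda>z. r + r * \<beta> * V z"] P_affine[OF LinfV_V] by simp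
  have P2: "P \<psi>2 y = r + r * \<beta> * P V y + P \<psi> y"
    unfolding \<psi>2_def using P_add[OF _ \<psi>, of "\<lambda>z. r + r * \<beta> * V z"] P_affine[OF LinfV_V] by simp
  have "\<nu> \<psi>1 + \<nu> \<psi>2 = \<nu> (\<lambda>z. 2 * r + 2 * r * \<beta> * V z)"
    using \<nu>_add[OF \<psi>12] unfolding \<psi>1_def \<psi>2_def by (simp add: algebra_simps)
  also have "\<dots> = 2 * r + 2 * r * \<beta> * \<nu> V" by (rule \<nu>_affine[OF LinfV_V])
  finally have "2 * r \<le> \<nu> \<psi>1 + \<nu> \<psi>2" using \<nu>_V r \<beta>_pos by simp
  then have "\<epsilon> * (2 * r) \<le> \<epsilon> * (\<nu> \<psi>1 + \<nu> \<psi>2)" using \<epsilon>_pos by (intro mult_left_mono) auto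
  then show ?thesis using m1 m2 P1 P2 by (simp add: algebra_simps)
qed

lemma osc_le_P:
  assumes \<phi>: "\<phi> \<in> LinfV V" and osc: "osc_le \<phi> r"
  shows "osc_le (P \<phi>) (rate * r)"
  unfolding osc_le_def
proof (intro allI)
  fix x y
  have r: "0 \<le> r" by (rule osc_le_nonneg[OF osc])
  obtain c where "\<And>z. \<phi> z - c \<le> r + (r * \<beta>) * V z" "\<And>z. - r + (- r * \<beta>) * V z \<le> \<phi> z - c"
    using osc_le_recentre[OF osc] by blast
  then have b: "\<bar>\<phi> z - c\<bar> \<le> r + r * \<beta> * V z" for z by (simp add: abs_le_iff algebra_simps)
  have \<psi>: "(\<lambda>z. \<phi> z - c) \<in> LinfV V" using \<phi> by simp
  have eq: "P \<phi> x - P \<phi> y = P (\<lambda>z. \<phi> z - c) x - P (\<lambda>z. \<phi> z - c) y"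
    using P_diff[OF \<phi>, of "\<lambda>_. c"] P_const by simp
  have drift2: "r * \<beta> * (P V x + P V y) \<le> r * \<beta> * (\<gamma> * (V x + V y) + 2 * K)"
    using drift[of x] drift[of y] r \<beta>_pos by (intro mult_left_mono) (auto simp: algebra_simps)
  show "P \<phi> x - P \<phi> y \<le> rate * r * (2 + \<beta> * V x + \<beta> * V y)"
  proof (cases "V x + V y \<le> R")
    case False
    have "P \<phi> x - P \<phi> y \<le> r * (2 + \<beta> * (\<gamma> * (V x + V y) + 2 * K))"
      using eq P_diff_le_far[OF \<psi> b, of x y] drift2 by (simp add: algebra_simps)
    also have "\<dots> \<le> rate * r * (2 + \<beta> * (V x + V y))" using False r by (intro rate_far) auto
    finally show ?thesis by (simp add: algebra_simps)
  next
    case True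
    then have Vx: "V x \<le> R" and Vy: "V y \<le> R" using V_ge1[of x] V_ge1[of y] by linarith+
    have "P \<phi> x - P \<phi> y \<le> r * (2 - 2 * \<epsilon> + \<beta> * (\<gamma> * (V x + V y) + 2 * K))"
      using eq P_diff_le_near[OF \<psi> r b Vx Vy] drift2 by (simp add: algebra_simps)
    also have "\<dots> \<le> rate * r * (2 + \<beta> * (V x + V y))"
      using True r V_ge1[of x] V_ge1[of y] by (intro rate_near) auto
    finally show ?thesis by (simp add: algebra_simps)
  qed
qed

lemma osc_le_Pk:
  assumes "\<phi> \<in> LinfV V" "osc_le \<phi> r"
  shows "osc_le ((P ^^ k) \<phi>) (rate ^ k * r)"
proof (induction k)
  case (Suc k)
  then have "osc_le (P ((P ^^ k) \<phi>)) (rate * (rate ^ k * r))" by (intro osc_le_P LinfV_Pk assms(1))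
  then show ?case by (simp add: mult.assoc)
qed (use assms in simp)

definition "step_const = 2 + \<beta> * (1 + \<gamma> + K)"

lemma step_const_pos: "0 < step_const" unfolding step_const_def using \<beta>_pos \<gamma>_ge K_ge by (smt (verit) mult_nonneg_nonneg)

lemma P_step_abs_le:
  assumes \<psi>: "\<psi> \<in> LinfV V" and osc: "osc_le \<psi> \<rho>"
  shows "\<bar>P \<psi> x - \<psi> x\<bar> \<le> \<rho> * step_const * V x"
proof -
  have \<rho>: "0 \<le> \<rho>" by (rule osc_le_nonneg[OF osc])
  let ?a = "\<rho> * (2 + \<beta> * V x)"
  have b: "\<psi> z - \<psi> x \<le> ?a + (\<rho> * \<beta>) * V z" "- ?a + (- \<rho> * \<beta>) * V z \<le> \<psi> z - \<psi> x" for z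
  proof -
    have "\<psi> z - \<psi> x \<le> \<rho> * (2 + \<beta> * V z + \<beta> * V x)" "\<psi> x - \<psi> z \<le> \<rho> * (2 + \<beta> * V x + \<beta> * V z)"
      using osc unfolding osc_le_def by blast+
    then show "\<psi> z - \<psi> x \<le> ?a + (\<rho> * \<beta>) * V z" "- ?a + (- \<rho> * \<beta>) * V z \<le> \<psi> z - \<psi> x"
      by (simp_all add: algebra_simps)
  qed
  have eq: "P (\<lambda>z. \<psi> z - \<psi> x) x = P \<psi> x - \<psi> x"
    using P_diff[OF \<psi>, of "\<lambda>_. \<psi> x"] P_const by simp
  have aff: "P (\<lambda>z. ?a + (\<rho> * \<beta>) * V z) x = ?a + (\<rho> * \<beta>) * P V x"
    "P (\<lambda>z. - ?a + (- \<rho> * \<beta>) * V z) x = - ?a + (- \<rho> * \<beta>) * P V x"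
    by (rule fun_cong[OF P_affine[OF LinfV_V]])+
  have "P (\<lambda>z. \<psi> z - \<psi> x) x \<le> P (\<lambda>z. ?a + (\<rho> * \<beta>) * V z) x"
    by (rule P_mono) (use \<psi> b in auto)
  then have up: "P \<psi> x - \<psi> x \<le> ?a + (\<rho> * \<beta>) * P V x" using eq aff by simp
  have "P (\<lambda>z. - ?a + (- \<rho> * \<beta>) * V z) x \<le> P (\<lambda>z. \<psi> z - \<psi> x) x"
    by (rule P_mono) (use \<psi> b in auto)
  then have lo: "- ?a - (\<rho> * \<beta>) * P V x \<le> P \<psi> x - \<psi> x" using eq aff by simp
  have "(\<rho> * \<beta>) * P V x \<le> (\<rho> * \<beta>) * ((\<gamma> + K) * V x)" using PV_le \<rho> \<beta>_pos by (intro mult_left_mono) auto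
  moreover have "\<rho> * 2 \<le> \<rho> * 2 * V x" using \<rho> V_ge1[of x] by (simp add: mult_le_cancel_left1)
  ultimately have "?a + (\<rho> * \<beta>) * P V x \<le> \<rho> * step_const * V x"
    unfolding step_const_def by (simp add: algebra_simps)
  with up lo show ?thesis by linarith
qed

text \<open>The limit does not depend on the point: \<open>undefined\<close> merely picks one.\<close>
definition "Pinf \<phi> = lim (\<lambda>k. (P ^^ k) \<phi> undefined)"

lemma Pk_tendsto_Pinf_rate:
  assumes \<phi>: "\<phi> \<in> LinfV V" and osc: "osc_le \<phi> r"
  shows "(\<lambda>k. (P ^^ k) \<phi> x) \<longlonglongrightarrow> Pinf \<phi>"
    and "\<bar>(P ^^ k) \<phi> x - Pinf \<phi>\<bar> \<le> r * step_const * V x * rate ^ k / (1 - rate)"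
proof -
  have step: "\<bar>(P ^^ Suc k) \<phi> y - (P ^^ k) \<phi> y\<bar> \<le> (r * step_const * V y) * rate ^ k" for k y
    using P_step_abs_le[OF LinfV_Pk[OF \<phi>] osc_le_Pk[OF \<phi> osc, of k], of y] by (simp add: mult_ac)
  note G = geometric_increments_convergent[where s="\<lambda>k. (P ^^ k) \<phi> y" for y, OF step rate_pos rate_lt1]
  have conv: "(\<lambda>k. (P ^^ k) \<phi> y) \<longlonglongrightarrow> lim (\<lambda>k. (P ^^ k) \<phi> y)" for y
    using G(1) by (simp add: convergent_LIMSEQ_iff)
  have same: "lim (\<lambda>k. (P ^^ k) \<phi> y) = Pinf \<phi>" for y
  proof -
    let ?w = "r * (2 + \<beta> * V y + \<beta> * V undefined)"
    have "(\<lambda>k. (P ^^ k) \<phi> y - (P ^^ k) \<phi> undefined) \<longlonglongrightarrow> lim (\<lambda>k. (P ^^ k) \<phi> y) - Pinf \<phi>"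
      unfolding Pinf_def by (intro tendsto_intros conv)
    moreover have "(\<lambda>k. (P ^^ k) \<phi> y - (P ^^ k) \<phi> undefined) \<longlonglongrightarrow> 0"
    proof (rule tendsto_sandwich[where f="\<lambda>k. - (rate ^ k * ?w)" and h="\<lambda>k. rate ^ k * ?w"])
      have o: "(P ^^ k) \<phi> u - (P ^^ k) \<phi> v \<le> rate ^ k * r * (2 + \<beta> * V u + \<beta> * V v)" for k u v
        using osc_le_Pk[OF \<phi> osc, of k] unfolding osc_le_def by blast
      have "(P ^^ k) \<phi> y - (P ^^ k) \<phi> undefined \<le> rate ^ k * ?w"
        and "(P ^^ k) \<phi> undefined - (P ^^ k) \<phi> y \<le> rate ^ k * ?w" for k
        using o[of k y undefined] o[of k undefined y] by (simp_all add: algebra_simps)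
      then show "\<forall>\<^sub>F k in sequentially. - (rate ^ k * ?w) \<le> (P ^^ k) \<phi> y - (P ^^ k) \<phi> undefined"
        and "\<forall>\<^sub>F k in sequentially. (P ^^ k) \<phi> y - (P ^^ k) \<phi> undefined \<le> rate ^ k * ?w"
        by (auto simp: algebra_simps)
      show "(\<lambda>k. rate ^ k * ?w) \<longlonglongrightarrow> 0"
        using rate_pos rate_lt1 by (intro tendsto_mult_left_zero LIMSEQ_power_zero) auto
      then show "(\<lambda>k. - (rate ^ k * ?w)) \<longlonglongrightarrow> 0"
        using tendsto_minus by fastforce
    qed
    ultimately show ?thesis using LIMSEQ_unique by fastforce
  qed
  show "(\<lambda>k. (P ^^ k) \<phi> x) \<longlonglongrightarrow> Pinf \<phi>" using conv[of x] same[of x] by simp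
  show "\<bar>(P ^^ k) \<phi> x - Pinf \<phi>\<bar> \<le> r * step_const * V x * rate ^ k / (1 - rate)"
    using G(2)[of x k] same[of x] by (simp add: abs_minus_commute)
qed

lemma Pk_tendsto_Pinf: "\<phi> \<in> LinfV V \<Longrightarrow> (\<lambda>k. (P ^^ k) \<phi> x) \<longlonglongrightarrow> Pinf \<phi>"
  by (metis osc_le_exists Pk_tendsto_Pinf_rate(1))

lemma Pinf_add: "\<phi> \<in> LinfV V \<Longrightarrow> \<psi> \<in> LinfV V \<Longrightarrow> Pinf (\<lambda>x. \<phi> x + \<psi> x) = Pinf \<phi> + Pinf \<psi>"
  using Pk_tendsto_Pinf[of "\<lambda>x. \<phi> x + \<psi> x" undefined]
    tendsto_add[OF Pk_tendsto_Pinf[of \<phi> undefined] Pk_tendsto_Pinf[of \<psi> undefined]]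
  by (simp add: Pk_add LIMSEQ_unique)

lemma Pinf_scale: "\<phi> \<in> LinfV V \<Longrightarrow> Pinf (\<lambda>x. c * \<phi> x) = c * Pinf \<phi>"
  using Pk_tendsto_Pinf[of "\<lambda>x. c * \<phi> x" undefined] tendsto_mult_left[OF Pk_tendsto_Pinf[of \<phi> undefined], of c]
  by (simp add: Pk_scale LIMSEQ_unique)

lemma Pinf_const: "Pinf (\<lambda>_. c) = c"
  using Pk_tendsto_Pinf[of "\<lambda>_. c" undefined] by (simp add: Pk_const LIMSEQ_unique)

lemma Pinf_mono: "\<phi> \<in> LinfV V \<Longrightarrow> \<psi> \<in> LinfV V \<Longrightarrow> (\<And>y. \<phi> y \<le> \<psi> y) \<Longrightarrow> Pinf \<phi> \<le> Pinf \<psi>"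
  by (rule LIMSEQ_le[OF Pk_tendsto_Pinf Pk_tendsto_Pinf]) (auto intro: Pk_mono)

lemma Pinf_P: "\<phi> \<in> LinfV V \<Longrightarrow> Pinf (P \<phi>) = Pinf \<phi>"
proof -
  assume \<phi>: "\<phi> \<in> LinfV V"
  have "(\<lambda>k. (P ^^ k) (P \<phi>) undefined) \<longlonglongrightarrow> Pinf \<phi>"
    using LIMSEQ_Suc[OF Pk_tendsto_Pinf[OF \<phi>]] by (simp add: funpow_Suc_right del: funpow.simps)
  then show ?thesis using Pk_tendsto_Pinf[of "P \<phi>" undefined] \<phi> by (simp add: LIMSEQ_unique)
qed

lemma Pinf_abs_le_const: "\<phi> \<in> LinfV V \<Longrightarrow> (\<And>y. \<bar>\<phi> y\<bar> \<le> B) \<Longrightarrow> \<bar>Pinf \<phi>\<bar> \<le> B"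
proof -
  assume \<phi>: "\<phi> \<in> LinfV V" and b: "\<And>y. \<bar>\<phi> y\<bar> \<le> B"
  have "\<phi> y \<le> B" "-B \<le> \<phi> y" for y using b[of y] by linarith+
  then have "Pinf \<phi> \<le> Pinf (\<lambda>_. B)" "Pinf (\<lambda>_. -B) \<le> Pinf \<phi>" using \<phi> by (auto intro: Pinf_mono)
  then show ?thesis by (simp add: Pinf_const)
qed

lemma Pinf_indicator_nonneg: "A \<in> sets borel \<Longrightarrow> 0 \<le> Pinf (indicator A)"
  using Pinf_mono[of "\<lambda>_. 0" "indicator A"] by (auto simp: Pinf_const)

text \<open>Continuity from above at \<open>\<emptyset>\<close>: the rate of convergence to \<open>Pinf\<close> is uniform over indicators,
  so one fixed power \<open>P ^^ k\<close> suffices, and it is continuous by \<open>P_tendsto\<close>.\<close>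
lemma Pinf_indicator_tendsto_0:
  assumes B: "\<And>n. B n \<in> sets borel" and lim: "\<And>y. (\<lambda>n. indicator (B n) y :: real) \<longlonglongrightarrow> 0"
  shows "(\<lambda>n. Pinf (indicator (B n))) \<longlonglongrightarrow> 0"
proof (rule LIMSEQ_I)
  fix e :: real assume e: "0 < e"
  define r where "r = (1/2) / \<beta>"
  define Err where "Err k = r * step_const * V undefined * rate ^ k / (1 - rate)" for k
  have osc: "osc_le (indicator A) r" for A :: "'a set"
    unfolding r_def by (rule osc_le_of_abs_le[where c="1/2"]) (use V_ge1 in \<open>auto simp: indicator_def\<close>)
  have est: "Pinf (indicator (B n)) \<le> (P ^^ k) (indicator (B n)) undefined + Err k" for n k
    using Pk_tendsto_Pinf_rate(2)[OF LinfV_indicator[OF B[of n]] osc, where k=k and x=undefined]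
    unfolding Err_def by linarith
  have "Err \<longlonglongrightarrow> 0" unfolding Err_def using rate_pos rate_lt1
    by (intro tendsto_eq_intros LIMSEQ_power_zero) auto
  then obtain k where "\<forall>n\<ge>k. norm (Err n - 0) < e/2" using LIMSEQ_D[of Err 0 "e/2"] e by auto
  then have k: "Err k < e/2" by auto
  have "(\<lambda>n. (P ^^ k) (indicator (B n)) undefined) \<longlonglongrightarrow> (P ^^ k) (\<lambda>_. 0) undefined"
    by (rule Pk_tendsto[where N=1]) (use B lim V_ge1 V_pos in \<open>auto simp: indicator_def less_imp_le\<close>)
  then have "(\<lambda>n. (P ^^ k) (indicator (B n)) undefined) \<longlonglongrightarrow> 0" by (simp add: Pk_const)
  then obtain n0 where n0: "\<forall>n\<ge>n0. norm ((P ^^ k) (indicator (B n)) undefined - 0) < e/2"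
    using LIMSEQ_D e half_gt_zero by blast
  show "\<exists>n0. \<forall>n\<ge>n0. norm (Pinf (indicator (B n)) - 0) < e"
  proof (intro exI allI impI)
    fix n assume "n0 \<le> n"
    then have "Pinf (indicator (B n)) < e" using est[of n k] k n0 unfolding abs_less_iff by auto
    then show "norm (Pinf (indicator (B n)) - 0) < e" using Pinf_indicator_nonneg[OF B[of n]] by simp
  qed
qed

lemma Pinf_indicator_sum:
  fixes A :: "nat \<Rightarrow> 'a set"
  assumes A: "range A \<subseteq> sets borel" "disjoint_family A"
  shows "Pinf (indicator (\<Union>i<n. A i)) = (\<Sum>i<n. Pinf (indicator (A i)))"
proof (induction n)
  case 0 then show ?case by (simp add: Pinf_const)
next
  case (Suc n)
  have U: "(\<Union>i<n. A i) \<in> sets borel" using A by (intro sets.finite_UN) auto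
  have An: "A n \<in> sets borel" using A by auto
  have "A n \<inter> (\<Union>i<n. A i) = {}"
  proof (rule equals0I)
    fix x assume "x \<in> A n \<inter> (\<Union>i<n. A i)"
    then obtain i where i: "i < n" "x \<in> A i" "x \<in> A n" by auto
    then have "A n \<inter> A i = {}" using A(2) unfolding disjoint_family_on_def by auto
    with i show False by auto
  qed
  then have "indicator (\<Union>i<Suc n. A i) = (\<lambda>x. indicator (A n) x + indicator (\<Union>i<n. A i) x :: real)"
    by (auto simp: lessThan_Suc indicator_def fun_eq_iff)
  then show ?case using Pinf_add[OF LinfV_indicator[OF An] LinfV_indicator[OF U]] Suc by simp
qed

lemma Pinf_indicator_sums:
  fixes A :: "nat \<Rightarrow> 'a set"
  assumes A: "range A \<subseteq> sets borel" "disjoint_family A"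
  shows "(\<lambda>i. Pinf (indicator (A i))) sums Pinf (indicator (\<Union>i. A i))"
proof -
  define B where "B n = (\<Union>i. A i) - (\<Union>i<n. A i)" for n
  have Un: "(\<Union>i<n. A i) \<in> sets borel" for n using A by (intro sets.finite_UN) auto
  have Bm: "B n \<in> sets borel" for n unfolding B_def using A Un by auto
  have "indicator (\<Union>i. A i) = (\<lambda>x. indicator (\<Union>i<n. A i) x + indicator (B n) x :: real)" for n
    unfolding B_def by (auto simp: indicator_def fun_eq_iff)
  then have eq: "Pinf (indicator (\<Union>i. A i)) = (\<Sum>i<n. Pinf (indicator (A i))) + Pinf (indicator (B n))" for n
    using Pinf_add[OF LinfV_indicator[OF Un] LinfV_indicator[OF Bm], of n n] Pinf_indicator_sum[OF A, of n] by simp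
  have lim0: "(\<lambda>n. indicator (B n) y :: real) \<longlonglongrightarrow> 0" for y
  proof (cases "y \<in> (\<Union>i. A i)")
    case True
    then obtain i where "y \<in> A i" by auto
    then have "\<forall>n\<ge>Suc i. indicator (B n) y = (0::real)" unfolding B_def by (auto simp: indicator_def)
    then show ?thesis by (intro tendsto_eventually) (auto simp: eventually_sequentially)
  next
    case False
    then show ?thesis unfolding B_def by (simp add: indicator_def)
  qed
  have "(\<lambda>n. Pinf (indicator (\<Union>i. A i)) - Pinf (indicator (B n))) \<longlonglongrightarrow> Pinf (indicator (\<Union>i. A i)) - 0"
    by (intro tendsto_intros Pinf_indicator_tendsto_0[OF Bm lim0])
  moreover have "(\<lambda>n. Pinf (indicator (\<Union>i. A i)) - Pinf (indicator (B n))) = (\<lambda>n. \<Sum>i<n. Pinf (indicator (A i)))"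
    using eq by (auto simp: algebra_simps)
  ultimately show ?thesis unfolding sums_def by simp
qed

definition "\<mu> = measure_of UNIV (sets borel) (\<lambda>A. ennreal (Pinf (indicator A)))"

lemma sigma_algebra_borel: "sigma_algebra UNIV (sets borel :: 'a set set)"
  using sets.sigma_algebra_axioms[of "borel :: 'a measure"] by simp

lemma sets_\<mu>[simp, measurable_cong]: "sets \<mu> = sets borel"
  unfolding \<mu>_def using sigma_algebra_borel by (simp add: sigma_algebra.sigma_sets_eq sets.space_closed)

lemma space_\<mu>[simp]: "space \<mu> = UNIV"
  using sets_eq_imp_space_eq[OF sets_\<mu>] by simp

lemma emeasure_\<mu>: "A \<in> sets borel \<Longrightarrow> emeasure \<mu> A = ennreal (Pinf (indicator A))"
  unfolding \<mu>_def
proof (rule emeasure_measure_of_sigma[OF sigma_algebra_borel])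
  have "indicator {} = (\<lambda>_::'a. 0::real)" by (auto simp: indicator_def)
  then show "positive (sets borel) (\<lambda>A. ennreal (Pinf (indicator A)))"
    unfolding positive_def by (simp add: Pinf_const)
  show "countably_additive (sets borel) (\<lambda>A. ennreal (Pinf (indicator A)))"
  proof (rule countably_additiveI)
    fix A :: "nat \<Rightarrow> 'a set" assume A: "range A \<subseteq> sets borel" "disjoint_family A"
    have s: "(\<lambda>i. Pinf (indicator (A i))) sums Pinf (indicator (\<Union>i. A i))" by (rule Pinf_indicator_sums[OF A])
    have nonneg: "\<And>i. 0 \<le> Pinf (indicator (A i))" using A(1) by (intro Pinf_indicator_nonneg) auto
    show "(\<Sum>i. ennreal (Pinf (indicator (A i)))) = ennreal (Pinf (indicator (\<Union>i. A i)))"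
      using suminf_ennreal2[OF nonneg sums_summable[OF s]] sums_unique[OF s] by simp
  qed
qed

lemma prob_space_\<mu>: "prob_space \<mu>"
proof
  show "emeasure \<mu> (space \<mu>) = 1" using emeasure_\<mu>[of UNIV] by (simp add: Pinf_const)
qed

lemma measure_\<mu>: "A \<in> sets borel \<Longrightarrow> measure \<mu> A = Pinf (indicator A)"
  unfolding measure_def using emeasure_\<mu> Pinf_indicator_nonneg by simp

lemma integral_\<mu>_eq_Pinf_bounded:
  assumes "\<psi> \<in> borel_measurable borel" "\<And>x. \<bar>\<psi> x\<bar> \<le> B"
  shows "(\<integral>x. \<psi> x \<partial>\<mu>) = Pinf \<psi>"
proof -
  have int: "integrable \<mu> f" if "f \<in> borel_measurable borel" "bounded (range f)" for f :: "'a \<Rightarrow> real"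
    using that prob_space_integral_abs_le(1)[OF prob_space_\<mu> sets_\<mu>] unfolding bounded_range_iff by blast
  have "(\<integral>x. \<psi> x \<partial>\<mu>) - Pinf \<psi> = 0"
  proof (rule linear_functional_zero_on_bounded[where \<Delta>="\<lambda>f. (\<integral>x. f x \<partial>\<mu>) - Pinf f" and C=2, OF _ _ _ _ assms])
    fix f g :: "'a \<Rightarrow> real"
    assume fg: "f \<in> borel_measurable borel" "g \<in> borel_measurable borel" "bounded (range f)" "bounded (range g)"
    have "(\<integral>x. f x + g x \<partial>\<mu>) = (\<integral>x. f x \<partial>\<mu>) + (\<integral>x. g x \<partial>\<mu>)"
      by (rule Bochner_Integration.integral_add[OF int[OF fg(1,3)] int[OF fg(2,4)]])
    moreover have "Pinf (\<lambda>x. f x + g x) = Pinf f + Pinf g"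
      by (rule Pinf_add[OF LinfV_of_bounded[OF fg(1,3)] LinfV_of_bounded[OF fg(2,4)]])
    ultimately show "(\<integral>x. f x + g x \<partial>\<mu>) - Pinf (\<lambda>x. f x + g x) = (\<integral>x. f x \<partial>\<mu>) - Pinf f + ((\<integral>x. g x \<partial>\<mu>) - Pinf g)"
      by simp
  next
    fix f :: "'a \<Rightarrow> real" and c
    assume "f \<in> borel_measurable borel" "bounded (range f)"
    then have "Pinf (\<lambda>x. c * f x) = c * Pinf f" by (intro Pinf_scale LinfV_of_bounded)
    then show "(\<integral>x. c * f x \<partial>\<mu>) - Pinf (\<lambda>x. c * f x) = c * ((\<integral>x. f x \<partial>\<mu>) - Pinf f)"
      by (simp add: algebra_simps)
  next
    fix f :: "'a \<Rightarrow> real" and B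
    assume f: "f \<in> borel_measurable borel" "\<And>x. \<bar>f x\<bar> \<le> B"
    have "\<bar>\<integral>x. f x \<partial>\<mu>\<bar> \<le> B" by (rule prob_space_integral_abs_le(2)[OF prob_space_\<mu> sets_\<mu> f])
    moreover have "\<bar>Pinf f\<bar> \<le> B" using f by (intro Pinf_abs_le_const LinfV_bounded) auto
    ultimately show "\<bar>(\<integral>x. f x \<partial>\<mu>) - Pinf f\<bar> \<le> 2 * B" by linarith
  next
    fix A :: "'a set" assume "A \<in> sets borel"
    then show "(\<integral>x. indicator A x \<partial>\<mu>) - Pinf (indicator A) = 0" by (simp add: measure_\<mu>)
  qed
  then show ?thesis by simp
qed

lemma integral_\<mu>_P_indicator: "A \<in> sets borel \<Longrightarrow> (\<integral>x. P (indicator A) x \<partial>\<mu>) = measure \<mu> A"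
proof -
  assume A: "A \<in> sets borel"
  have "\<bar>P (indicator A) x\<bar> \<le> 1" for x by (rule P_abs_le_const[OF LinfV_indicator[OF A]]) (simp add: indicator_def)
  then have "(\<integral>x. P (indicator A) x \<partial>\<mu>) = Pinf (P (indicator A))"
    by (rule integral_\<mu>_eq_Pinf_bounded[OF P_meas[OF LinfV_indicator[OF A]]])
  then show ?thesis using Pinf_P[OF LinfV_indicator[OF A]] measure_\<mu>[OF A] by simp
qed

lemma integrable_\<mu>_V: "integrable \<mu> V"
proof -
  define f where "f n x = min (V x) (real n)" for n x
  have fm: "f n \<in> borel_measurable borel" for n unfolding f_def[abs_def] using V_meas by simp
  have fb: "\<bar>f n x\<bar> \<le> real n" for n x unfolding f_def using V_pos[of x] by auto
  have fV: "f n \<in> LinfV V" for n using LinfV_bounded[OF fm fb] .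
  have fi: "integrable \<mu> (f n)" for n using prob_space_integral_abs_le(1)[OF prob_space_\<mu> sets_\<mu> fm fb] .
  have fPinf: "(\<integral>x. f n x \<partial>\<mu>) = Pinf (f n)" for n by (rule integral_\<mu>_eq_Pinf_bounded[OF fm fb])
  have inc: "incseq (\<lambda>n. \<integral>x. f n x \<partial>\<mu>)"
    unfolding fPinf by (intro incseq_SucI Pinf_mono fV) (auto simp: f_def)
  have bdd: "bdd_above (range (\<lambda>n. \<integral>x. f n x \<partial>\<mu>))"
    unfolding fPinf by (rule bdd_aboveI2[where M="Pinf V"]) (intro Pinf_mono fV LinfV_V, simp add: f_def)
  have lim: "(\<lambda>n. f n x) \<longlonglongrightarrow> V x" for x
  proof (rule tendsto_eventually)
    obtain n0 where "V x \<le> real n0" using real_arch_simple by blast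
    then show "\<forall>\<^sub>F n in sequentially. f n x = V x"
      unfolding eventually_sequentially f_def by (intro exI[of _ n0]) auto
  qed
  show ?thesis
  proof (rule integrable_monotone_convergence[OF fi])
    show "AE x in \<mu>. mono (\<lambda>n. f n x)" by (auto simp: mono_def f_def)
    show "AE x in \<mu>. (\<lambda>i. f i x) \<longlonglongrightarrow> V x" using lim by simp
    show "(\<lambda>i. \<integral>x. f i x \<partial>\<mu>) \<longlonglongrightarrow> (SUP i. \<integral>x. f i x \<partial>\<mu>)" by (rule LIMSEQ_incseq_SUP[OF bdd inc])
    show "V \<in> borel_measurable \<mu>" using V_meas by simp
  qed
qed

text \<open>From the bounded case by truncation and dominated convergence.\<close>
lemma integral_\<mu>_P:
  assumes \<phi>: "\<phi> \<in> LinfV V"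
  shows "(\<integral>x. P \<phi> x \<partial>\<mu>) = (\<integral>x. \<phi> x \<partial>\<mu>)"
proof -
  obtain N where N: "0 \<le> N" "\<And>x. \<bar>\<phi> x\<bar> \<le> N * V x" using LinfV_E[OF \<phi>] by blast
  define t where "t n y = max (- real n) (min (real n) (\<phi> y))" for n y
  have tm: "t n \<in> borel_measurable borel" for n unfolding t_def[abs_def] using LinfV_measurable[OF \<phi>] by simp
  have tb: "\<bar>t n y\<bar> \<le> real n" for n y unfolding t_def by auto
  have tN: "\<bar>t n y\<bar> \<le> N * V y" for n y using N(2)[of y] unfolding t_def by auto
  have tV: "t n \<in> LinfV V" for n using LinfV_bounded[OF tm tb] .
  have tlim: "(\<lambda>n. t n y) \<longlonglongrightarrow> \<phi> y" for y
  proof (rule tendsto_eventually)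
    obtain n0 where "\<bar>\<phi> y\<bar> \<le> real n0" using real_arch_simple by blast
    then show "\<forall>\<^sub>F n in sequentially. t n y = \<phi> y"
      unfolding eventually_sequentially t_def by (intro exI[of _ n0]) auto
  qed
  have eq: "(\<integral>x. P (t n) x \<partial>\<mu>) = (\<integral>x. t n x \<partial>\<mu>)" for n
  proof -
    have "(\<integral>x. P (t n) x \<partial>\<mu>) = Pinf (P (t n))"
      by (rule integral_\<mu>_eq_Pinf_bounded[OF P_meas[OF tV] P_abs_le_const[OF tV tb]])
    also have "\<dots> = Pinf (t n)" by (rule Pinf_P[OF tV])
    also have "\<dots> = (\<integral>x. t n x \<partial>\<mu>)" by (rule integral_\<mu>_eq_Pinf_bounded[OF tm tb, symmetric])
    finally show ?thesis .
  qed
  have wint: "integrable \<mu> (\<lambda>x. c * V x)" for c using integrable_\<mu>_V by simp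
  have "(\<lambda>n. \<integral>x. t n x \<partial>\<mu>) \<longlonglongrightarrow> (\<integral>x. \<phi> x \<partial>\<mu>)"
    by (rule integral_dominated_convergence[where w="\<lambda>x. N * V x", OF _ _ wint])
       (use tlim tN tm LinfV_measurable[OF \<phi>] in auto)
  moreover have "(\<lambda>n. \<integral>x. P (t n) x \<partial>\<mu>) \<longlonglongrightarrow> (\<integral>x. P \<phi> x \<partial>\<mu>)"
  proof (rule integral_dominated_convergence[where w="\<lambda>x. (N * (\<gamma> + K)) * V x", OF _ _ wint])
    show "(\<lambda>x. P \<phi> x) \<in> borel_measurable \<mu>" "\<And>n. (\<lambda>x. P (t n) x) \<in> borel_measurable \<mu>"
      using P_meas[OF \<phi>] P_meas[OF tV] by simp_all
    show "AE x in \<mu>. (\<lambda>n. P (t n) x) \<longlonglongrightarrow> P \<phi> x" using P_tendsto[OF tV \<phi> tN tlim] by simp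
    have "\<bar>P (t n) y\<bar> \<le> (N * (\<gamma> + K)) * V y" for n y
      using Pk_abs_le[OF tV tN N(1), where k=1 and x=y] by simp
    then show "\<And>n. AE x in \<mu>. norm (P (t n) x) \<le> N * (\<gamma> + K) * V x" by simp
  qed
  ultimately show ?thesis using eq LIMSEQ_unique by auto
qed

lemma integral_\<mu>_eq_Pinf:
  assumes \<phi>: "\<phi> \<in> LinfV V"
  shows "(\<integral>x. \<phi> x \<partial>\<mu>) = Pinf \<phi>"
proof -
  have inv: "(\<integral>x. (P ^^ k) \<phi> x \<partial>\<mu>) = (\<integral>x. \<phi> x \<partial>\<mu>)" for k
    by (induction k) (simp_all add: integral_\<mu>_P[OF LinfV_Pk[OF \<phi>]])
  obtain r where osc: "osc_le \<phi> r" using osc_le_exists[OF \<phi>] by blast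
  have r: "0 \<le> r" using osc_le_nonneg[OF osc] .
  define c where "c = r * step_const / (1 - rate)"
  have bnd: "\<bar>(P ^^ k) \<phi> x\<bar> \<le> \<bar>Pinf \<phi>\<bar> + c * V x" for k x
  proof -
    have "\<bar>(P ^^ k) \<phi> x - Pinf \<phi>\<bar> \<le> r * step_const * V x * rate ^ k / (1 - rate)" by (rule Pk_tendsto_Pinf_rate(2)[OF \<phi> osc])
    also have "\<dots> \<le> r * step_const * V x * 1 / (1 - rate)"
      using r step_const_pos V_pos[of x] rate_pos rate_lt1
      by (intro divide_right_mono mult_left_mono power_le_one) (auto intro: mult_nonneg_nonneg less_imp_le)
    finally show ?thesis unfolding c_def by simp
  qed
  have "(\<lambda>k. \<integral>x. (P ^^ k) \<phi> x \<partial>\<mu>) \<longlonglongrightarrow> (\<integral>x. Pinf \<phi> \<partial>\<mu>)"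
  proof (rule integral_dominated_convergence[where w="\<lambda>x. \<bar>Pinf \<phi>\<bar> + c * V x"])
    show "integrable \<mu> (\<lambda>x. \<bar>Pinf \<phi>\<bar> + c * V x)"
      using integrable_\<mu>_V
      by (intro Bochner_Integration.integrable_add finite_measure.integrable_const[OF prob_space.finite_measure[OF prob_space_\<mu>]]) simp
    show "(P ^^ k) \<phi> \<in> borel_measurable \<mu>" for k using LinfV_measurable[OF LinfV_Pk[OF \<phi>]] by simp
    show "AE x in \<mu>. (\<lambda>k. (P ^^ k) \<phi> x) \<longlonglongrightarrow> Pinf \<phi>" using Pk_tendsto_Pinf[OF \<phi>] by simp
    show "AE x in \<mu>. norm ((P ^^ k) \<phi> x) \<le> \<bar>Pinf \<phi>\<bar> + c * V x" for k using bnd by simp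
  qed simp
  then have "(\<lambda>k. \<integral>x. \<phi> x \<partial>\<mu>) \<longlonglongrightarrow> Pinf \<phi>" using inv prob_space.prob_space[OF prob_space_\<mu>] by simp
  then show ?thesis by (simp add: LIMSEQ_const_iff)
qed

lemma integral_P_eq_of_indicators:
  fixes \<rho> :: "'a measure"
  assumes \<rho>: "prob_space \<rho>" "sets \<rho> = sets borel"
    and inv: "\<And>A. A \<in> sets borel \<Longrightarrow> (\<integral>x. P (indicator A) x \<partial>\<rho>) = measure \<rho> A"
    and \<psi>: "\<psi> \<in> borel_measurable borel" "\<And>x. \<bar>\<psi> x\<bar> \<le> B"
  shows "(\<integral>x. P \<psi> x \<partial>\<rho>) = (\<integral>x. \<psi> x \<partial>\<rho>)"
proof -
  have sp: "space \<rho> = UNIV" using sets_eq_imp_space_eq[OF \<rho>(2)] by simp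
  have int: "integrable \<rho> f" if "(f :: 'a \<Rightarrow> real) \<in> borel_measurable borel" "bounded (range f)" for f
    using that prob_space_integral_abs_le(1)[OF \<rho>] unfolding bounded_range_iff by blast
  have P_bounded: "P f \<in> borel_measurable borel" "bounded (range (P f))"
    if "f \<in> borel_measurable borel" "bounded (range f)" for f
    using that P_meas P_abs_le_const LinfV_of_bounded unfolding bounded_range_iff by blast+
  have "(\<integral>x. P \<psi> x \<partial>\<rho>) - (\<integral>x. \<psi> x \<partial>\<rho>) = 0"
  proof (rule linear_functional_zero_on_bounded[where \<Delta>="\<lambda>f. (\<integral>x. P f x \<partial>\<rho>) - (\<integral>x. f x \<partial>\<rho>)" and C=2, OF _ _ _ _ \<psi>])
    fix f g :: "'a \<Rightarrow> real"
    assume fg: "f \<in> borel_measurable borel" "g \<in> borel_measurable borel" "bounded (range f)" "bounded (range g)"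
    have "P (\<lambda>x. f x + g x) = (\<lambda>x. P f x + P g x)" using fg by (intro P_add LinfV_of_bounded)
    moreover have "(\<integral>x. P f x + P g x \<partial>\<rho>) = (\<integral>x. P f x \<partial>\<rho>) + (\<integral>x. P g x \<partial>\<rho>)"
      using fg by (intro Bochner_Integration.integral_add int P_bounded)
    moreover have "(\<integral>x. f x + g x \<partial>\<rho>) = (\<integral>x. f x \<partial>\<rho>) + (\<integral>x. g x \<partial>\<rho>)"
      using fg by (intro Bochner_Integration.integral_add int)
    ultimately show "(\<integral>x. P (\<lambda>x. f x + g x) x \<partial>\<rho>) - (\<integral>x. f x + g x \<partial>\<rho>)
        = (\<integral>x. P f x \<partial>\<rho>) - (\<integral>x. f x \<partial>\<rho>) + ((\<integral>x. P g x \<partial>\<rho>) - (\<integral>x. g x \<partial>\<rho>))"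
      by simp
  next
    fix f :: "'a \<Rightarrow> real" and c
    assume "f \<in> borel_measurable borel" "bounded (range f)"
    then have "P (\<lambda>x. c * f x) = (\<lambda>x. c * P f x)" by (intro P_scale LinfV_of_bounded)
    then show "(\<integral>x. P (\<lambda>x. c * f x) x \<partial>\<rho>) - (\<integral>x. c * f x \<partial>\<rho>) = c * ((\<integral>x. P f x \<partial>\<rho>) - (\<integral>x. f x \<partial>\<rho>))"
      by (simp add: algebra_simps)
  next
    fix f :: "'a \<Rightarrow> real" and B
    assume f: "f \<in> borel_measurable borel" "\<And>x. \<bar>f x\<bar> \<le> B"
    have fV: "f \<in> LinfV V" using LinfV_bounded[OF f] .
    have "\<bar>\<integral>x. f x \<partial>\<rho>\<bar> \<le> B" by (rule prob_space_integral_abs_le(2)[OF \<rho> f])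
    moreover have "\<bar>\<integral>x. P f x \<partial>\<rho>\<bar> \<le> B"
      by (rule prob_space_integral_abs_le(2)[OF \<rho> P_meas[OF fV] P_abs_le_const[OF fV f(2)]])
    ultimately show "\<bar>(\<integral>x. P f x \<partial>\<rho>) - (\<integral>x. f x \<partial>\<rho>)\<bar> \<le> 2 * B" by linarith
  next
    fix A :: "'a set" assume "A \<in> sets borel"
    then show "(\<integral>x. P (indicator A) x \<partial>\<rho>) - (\<integral>x. indicator A x \<partial>\<rho>) = 0" using inv sp by simp
  qed
  then show ?thesis by simp
qed

lemma invariant_measure_unique:
  fixes \<rho> :: "'a measure"
  assumes \<rho>: "prob_space \<rho>" "sets \<rho> = sets borel"
    and inv: "\<And>A. A \<in> sets borel \<Longrightarrow> (\<integral>x. P (indicator A) x \<partial>\<rho>) = measure \<rho> A"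
  shows "\<rho> = \<mu>"
proof -
  have sp: "space \<rho> = UNIV" using sets_eq_imp_space_eq[OF \<rho>(2)] by simp
  have "measure \<rho> A = measure \<mu> A" if A: "A \<in> sets borel" for A
  proof -
    have b: "\<bar>(P ^^ k) (indicator A) x\<bar> \<le> 1" for k x
      by (rule Pk_abs_le_const[OF LinfV_indicator[OF A]]) (simp add: indicator_def)
    have "(\<integral>x. (P ^^ k) (indicator A) x \<partial>\<rho>) = measure \<rho> A" for k
    proof (induction k)
      case (Suc k)
      then show ?case
        using integral_P_eq_of_indicators[OF \<rho> inv LinfV_measurable[OF LinfV_Pk[OF LinfV_indicator[OF A]]] b] by simp
    qed (use sp in simp)
    moreover have "(\<lambda>k. \<integral>x. (P ^^ k) (indicator A) x \<partial>\<rho>) \<longlonglongrightarrow> (\<integral>x. Pinf (indicator A) \<partial>\<rho>)"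
    proof (rule integral_dominated_convergence[where w="\<lambda>_. 1"])
      show "integrable \<rho> (\<lambda>_. 1::real)"
        using finite_measure.integrable_const[OF prob_space.finite_measure[OF \<rho>(1)]] .
      show "(P ^^ k) (indicator A) \<in> borel_measurable \<rho>" for k
        by (subst measurable_cong_sets[OF \<rho>(2) refl]) (rule LinfV_measurable[OF LinfV_Pk[OF LinfV_indicator[OF A]]])
      show "AE x in \<rho>. (\<lambda>k. (P ^^ k) (indicator A) x) \<longlonglongrightarrow> Pinf (indicator A)"
        using Pk_tendsto_Pinf[OF LinfV_indicator[OF A]] by simp
      show "AE x in \<rho>. norm ((P ^^ k) (indicator A) x) \<le> 1" for k using b by simp
    qed simp
    ultimately have "(\<lambda>k. measure \<rho> A) \<longlonglongrightarrow> Pinf (indicator A)"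
      using prob_space.prob_space[OF \<rho>(1)] by simp
    then show ?thesis using measure_\<mu>[OF A] by (simp add: LIMSEQ_const_iff)
  qed
  then show "\<rho> = \<mu>"
    using \<rho>(2) finite_measure.emeasure_eq_measure[OF prob_space.finite_measure[OF \<rho>(1)]]
      finite_measure.emeasure_eq_measure[OF prob_space.finite_measure[OF prob_space_\<mu>]]
    by (intro measure_eqI) auto
qed

lemma normV_Pk_minus_integral_le:
  assumes \<phi>: "\<phi> \<in> LinfV V"
  shows "normV V (\<lambda>x. (P ^^ k) \<phi> x - (\<integral>y. \<phi> y \<partial>\<mu>))
    \<le> step_const / (\<beta> * (1 - rate)) * rate ^ k * normV V (\<lambda>x. \<phi> x - (\<integral>y. \<phi> y \<partial>\<mu>))"
proof (rule normV_le[OF _ V_pos])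
  fix x
  define M where "M = normV V (\<lambda>x. \<phi> x - (\<integral>y. \<phi> y \<partial>\<mu>))"
  have "\<bar>\<phi> x - (\<integral>y. \<phi> y \<partial>\<mu>)\<bar> \<le> M * V x" for x
    unfolding M_def using \<phi> by (intro abs_le_normV V_pos) simp
  then have "osc_le \<phi> (M / \<beta>)" by (rule osc_le_of_abs_le)
  then have "\<bar>(P ^^ k) \<phi> x - Pinf \<phi>\<bar> \<le> (M / \<beta>) * step_const * V x * rate ^ k / (1 - rate)"
    by (rule Pk_tendsto_Pinf_rate(2)[OF \<phi>])
  then show "\<bar>(P ^^ k) \<phi> x - (\<integral>y. \<phi> y \<partial>\<mu>)\<bar> \<le> step_const / (\<beta> * (1 - rate)) * rate ^ k * M * V x"
    using integral_\<mu>_eq_Pinf[OF \<phi>] by (simp add: field_simps)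
qed

lemma lyapunov_drift: "\<exists>g C. 0 < g \<and> g < 1 \<and> C \<ge> 0 \<and> (\<forall>x. P V x \<le> g * V x + C)"
proof (intro exI conjI allI)
  show "P V x \<le> 1/2 * V x + K" for x
  proof -
    have "\<gamma> * V x \<le> 1/2 * V x" using \<gamma>_le V_pos[of x] by (intro mult_right_mono) auto
    then show ?thesis using drift[of x] by linarith
  qed
qed (use K_ge in auto)

lemma geometric_ergodicity:
  "\<exists>\<mu>. (prob_space \<mu> \<and> sets \<mu> = sets borel \<and>
          (\<forall>A\<in>sets borel. (\<integral>x. P (indicator A) x \<partial>\<mu>) = measure \<mu> A))
     \<and> (\<forall>\<nu>. prob_space \<nu> \<and> sets \<nu> = sets borel \<and>
          (\<forall>A\<in>sets borel. (\<integral>x. P (indicator A) x \<partial>\<nu>) = measure \<nu> A) \<longrightarrow> \<nu> = \<mu>)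
     \<and> (\<integral>\<^sup>+x. ennreal (V x) \<partial>\<mu>) < \<infinity>
     \<and> (\<exists>c a. c > 0 \<and> 0 < a \<and> a < 1 \<and>
          (\<forall>\<phi>\<in>LinfV V. \<forall>k::nat. k \<ge> 1 \<longrightarrow>
             normV V (\<lambda>x. (P ^^ k) \<phi> x - (\<integral>y. \<phi> y \<partial>\<mu>))
             \<le> c * a ^ k * normV V (\<lambda>x. \<phi> x - (\<integral>y. \<phi> y \<partial>\<mu>))))"
proof -
  have fin: "(\<integral>\<^sup>+x. ennreal (V x) \<partial>\<mu>) < \<infinity>"
    using integrableD(2)[OF integrable_\<mu>_V] V_pos by (simp add: less_imp_le less_top)
  have rate: "\<exists>c a. c > 0 \<and> 0 < a \<and> a < 1 \<and>
      (\<forall>\<phi>\<in>LinfV V. \<forall>k::nat. k \<ge> 1 \<longrightarrow>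
         normV V (\<lambda>x. (P ^^ k) \<phi> x - (\<integral>y. \<phi> y \<partial>\<mu>)) \<le> c * a ^ k * normV V (\<lambda>x. \<phi> x - (\<integral>y. \<phi> y \<partial>\<mu>)))"
  proof (rule exI[of _ "step_const / (\<beta> * (1 - rate))"], rule exI[of _ rate], intro conjI ballI allI impI)
    show "0 < step_const / (\<beta> * (1 - rate))" using step_const_pos \<beta>_pos rate_lt1 by simp
    show "0 < rate" "rate < 1" by (fact rate_pos rate_lt1)+
    show "normV V (\<lambda>x. (P ^^ k) \<phi> x - (\<integral>y. \<phi> y \<partial>\<mu>))
        \<le> step_const / (\<beta> * (1 - rate)) * rate ^ k * normV V (\<lambda>x. \<phi> x - (\<integral>y. \<phi> y \<partial>\<mu>))"
      if "\<phi> \<in> LinfV V" for \<phi> and k :: nat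
      by (rule normV_Pk_minus_integral_le[OF that])
  qed
  have invariant: "\<forall>A\<in>sets borel. (\<integral>x. P (indicator A) x \<partial>\<mu>) = measure \<mu> A"
    using integral_\<mu>_P_indicator by blast
  have unique: "\<forall>\<nu>. prob_space \<nu> \<and> sets \<nu> = sets borel \<and>
      (\<forall>A\<in>sets borel. (\<integral>x. P (indicator A) x \<partial>\<nu>) = measure \<nu> A) \<longrightarrow> \<nu> = \<mu>"
    by (intro allI impI invariant_measure_unique) auto
  show ?thesis
    using prob_space_\<mu> sets_\<mu> invariant unique fin rate by (intro exI[of _ \<mu>] conjI) assumption+
qed

end

section \<open>The \<open>h\<close>-transformed kernel\<close>

locale h_transform =
  fixes Q :: "'a::polish_space \<Rightarrow> 'a measure"
    and K :: "nat \<Rightarrow> 'a set"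
    and W :: "'a \<Rightarrow> real"
    and \<gamma> b \<alpha> :: "nat \<Rightarrow> real"
    and \<eta> :: "nat \<Rightarrow> 'a measure"
    and \<Lambda> :: real
    and h :: "'a \<Rightarrow> real"
  assumes kernel: "is_kernel Q"
    and K_compact: "\<And>n. n \<ge> 1 \<Longrightarrow> compact (K n)"
    and K_mono: "\<And>n. n \<ge> 1 \<Longrightarrow> K n \<subseteq> K (Suc n)"
    and K_exhaust: "\<And>C. compact C \<Longrightarrow> \<exists>m\<ge>1. C \<subseteq> K m"
    and W_meas: "W \<in> borel_measurable borel"
    and W_ge1: "\<And>x. W x \<ge> 1"
    and W_bdd: "\<And>C. compact C \<Longrightarrow> bounded (W ` C)"
    and \<gamma>_pos: "\<And>n. n \<ge> 1 \<Longrightarrow> \<gamma> n > 0"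
    and b_pos: "\<And>n. n \<ge> 1 \<Longrightarrow> b n > 0"
    and \<gamma>_lim: "\<gamma> \<longlonglongrightarrow> 0"
    and lyap: "\<And>n x. n \<ge> 1 \<Longrightarrow>
       (\<integral>\<^sup>+y. ennreal (W y) \<partial>(Q x)) \<le> ennreal (\<gamma> n * W x + b n * indicator (K n) x)"
    and \<eta>_prob: "\<And>n. n \<ge> 1 \<Longrightarrow> prob_space (\<eta> n) \<and> sets (\<eta> n) = sets borel"
    and \<alpha>_pos: "\<And>n. n \<ge> 1 \<Longrightarrow> \<alpha> n > 0"
    and minor: "\<And>n x A. n \<ge> 1 \<Longrightarrow> x \<in> K n \<Longrightarrow> A \<in> sets borel \<Longrightarrow>
       emeasure (Q x) A \<ge> ennreal (\<alpha> n) * emeasure (\<eta> n) A"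
    and \<Lambda>_pos: "\<Lambda> > 0"
    and h_in: "h \<in> LinfV W"
    and h_eig: "kop Q h = (\<lambda>x. \<Lambda> * h x)"
    and h_norm: "normV W h = 1"
    and h_pos: "\<And>x. h x > 0"
begin

lemma sets_Q[simp, measurable_cong]: "sets (Q x) = sets borel"
  using kernel unfolding is_kernel_def by blast

lemma space_Q[simp]: "space (Q x) = UNIV"
  using sets_eq_imp_space_eq[OF sets_Q] by simp

lemma emeasure_Q_measurable: "A \<in> sets borel \<Longrightarrow> (\<lambda>x. emeasure (Q x) A) \<in> borel_measurable borel"
  using kernel unfolding is_kernel_def by blast

lemma nn_integral_Q_measurable:
  fixes f :: "'a \<Rightarrow> ennreal"
  assumes "f \<in> borel_measurable borel"
  shows "(\<lambda>x. \<integral>\<^sup>+y. f y \<partial>Q x) \<in> borel_measurable borel"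
  using assms
proof induct
  case (cong f g)
  then have "(\<lambda>x. \<integral>\<^sup>+y. f y \<partial>Q x) = (\<lambda>x. \<integral>\<^sup>+y. g y \<partial>Q x)" by (intro ext nn_integral_cong) simp
  with cong show ?case by simp
next
  case (set A)
  then have "(\<lambda>x. \<integral>\<^sup>+y. indicator A y \<partial>Q x) = (\<lambda>x. emeasure (Q x) A)" by (intro ext nn_integral_indicator) simp
  with emeasure_Q_measurable[OF set] show ?case by simp
next
  case (mult u c)
  then have "(\<lambda>x. \<integral>\<^sup>+y. c * u y \<partial>Q x) = (\<lambda>x. c * \<integral>\<^sup>+y. u y \<partial>Q x)" by (intro ext nn_integral_cmult) simp
  with mult show ?case by simp
next
  case (add u v)
  then have "(\<lambda>x. \<integral>\<^sup>+y. v y + u y \<partial>Q x) = (\<lambda>x. (\<integral>\<^sup>+y. v y \<partial>Q x) + (\<integral>\<^sup>+y. u y \<partial>Q x))"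
    by (intro ext nn_integral_add) simp_all
  with add show ?case by simp
next
  case (seq U)
  then have "(\<lambda>x. \<integral>\<^sup>+y. (SUP i. U i) y \<partial>Q x) = (\<lambda>x. SUP i. \<integral>\<^sup>+y. U i y \<partial>Q x)"
    unfolding SUP_apply by (intro ext nn_integral_monotone_convergence_SUP) auto
  with seq show ?case by simp
qed

lemma measurable_Q: "f \<in> borel_measurable borel \<Longrightarrow> f \<in> borel_measurable (Q x)"
  by (subst measurable_cong_sets[OF sets_Q refl])

lemma W_pos: "0 < W x" using W_ge1[of x] by linarith

lemma LinfV_W_iff: "f \<in> LinfV W \<longleftrightarrow> f \<in> borel_measurable borel \<and> (\<exists>N. \<forall>y. \<bar>f y\<bar> \<le> N * W y)"
  by (rule LinfV_iff) (rule W_pos)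

lemma integrable_Q_W: "integrable (Q x) W"
proof (rule integrableI_bounded)
  show "(\<integral>\<^sup>+y. ennreal (norm (W y)) \<partial>Q x) < \<infinity>"
    using lyap[of 1 x] W_pos by (auto simp: less_top[symmetric] top_unique less_imp_le)
qed (use W_meas in simp)

lemma integrable_Q: "f \<in> LinfV W \<Longrightarrow> integrable (Q x) f"
  by (rule integrable_LinfV[OF integrable_Q_W sets_Q W_pos])

lemma kop_measurable: "f \<in> LinfV W \<Longrightarrow> kop Q f \<in> borel_measurable borel"
proof -
  assume f: "f \<in> LinfV W"
  have "kop Q f = (\<lambda>x. enn2real (\<integral>\<^sup>+y. ennreal (f y) \<partial>Q x) - enn2real (\<integral>\<^sup>+y. ennreal (- f y) \<partial>Q x))"
    unfolding kop_def by (intro ext real_lebesgue_integral_def integrable_Q[OF f])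
  also have "\<dots> \<in> borel_measurable borel"
    using nn_integral_Q_measurable[of "\<lambda>y. ennreal (f y)"] nn_integral_Q_measurable[of "\<lambda>y. ennreal (- f y)"]
      LinfV_measurable[OF f] by simp
  finally show ?thesis .
qed

lemma kop_add: "f \<in> LinfV W \<Longrightarrow> g \<in> LinfV W \<Longrightarrow> kop Q (\<lambda>y. f y + g y) x = kop Q f x + kop Q g x"
  unfolding kop_def by (intro Bochner_Integration.integral_add integrable_Q)

lemma kop_scale: "kop Q (\<lambda>y. c * f y) x = c * kop Q f x"
  unfolding kop_def by simp

lemma kop_mono: "f \<in> LinfV W \<Longrightarrow> g \<in> LinfV W \<Longrightarrow> (\<And>y. f y \<le> g y) \<Longrightarrow> kop Q f x \<le> kop Q g x"
  unfolding kop_def by (intro integral_mono integrable_Q)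

lemma kop_W_le: "n \<ge> 1 \<Longrightarrow> kop Q W x \<le> \<gamma> n * W x + b n * indicator (K n) x"
proof -
  assume n: "n \<ge> 1"
  have "0 \<le> \<gamma> n * W x + b n * indicator (K n) x"
    using \<gamma>_pos[OF n] b_pos[OF n] W_pos[of x] by (simp add: indicator_def)
  moreover have "kop Q W x = enn2real (\<integral>\<^sup>+y. ennreal (W y) \<partial>Q x)"
    unfolding kop_def by (rule integral_eq_nn_integral) (use W_meas W_pos in \<open>auto simp: less_imp_le\<close>)
  ultimately show ?thesis using enn2real_leI lyap[OF n] by metis
qed

lemma h_measurable: "h \<in> borel_measurable borel" using h_in unfolding LinfV_def by simp

lemma h_le_W: "h x \<le> W x"
  using abs_le_normV[OF h_in W_pos, of x] h_norm by simp

definition "V x = W x / h x"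

lemma V_eq: "(\<lambda>x. W x / h x) = V" unfolding V_def by simp

lemma V_ge1: "1 \<le> V x" unfolding V_def using h_le_W[of x] h_pos[of x] by simp

lemma V_pos: "0 < V x" using V_ge1[of x] by linarith

lemma V_meas: "V \<in> borel_measurable borel" unfolding V_def[abs_def] using W_meas h_measurable by simp

lemma LinfV_V_self: "V \<in> LinfV V"
  using V_meas V_pos LinfV_iff[of V V] by (auto intro!: exI[of _ 1] simp: less_imp_le)

lemma LinfV_V_const: "(\<lambda>_. c) \<in> LinfV V"
  using V_ge1 V_pos LinfV_iff[of V "\<lambda>_. c"] by (auto intro!: exI[of _ "\<bar>c\<bar>"] simp: mult_le_cancel_left1)

lemma h_mult_V: "h y * V y = W y" unfolding V_def using h_pos[of y] by simp

lemma LinfV_h_mult: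
  assumes "\<phi> \<in> LinfV V"
  shows "(\<lambda>y. h y * \<phi> y) \<in> LinfV W"
proof -
  obtain N where N: "\<phi> \<in> borel_measurable borel" "\<And>y. \<bar>\<phi> y\<bar> \<le> N * V y"
    using assms LinfV_iff[of V] V_pos by blast
  have "\<bar>h y * \<phi> y\<bar> \<le> N * W y" for y
  proof -
    have "\<bar>h y * \<phi> y\<bar> = h y * \<bar>\<phi> y\<bar>" using h_pos[of y] by (simp add: abs_mult)
    also have "\<dots> \<le> h y * (N * V y)" using N(2)[of y] h_pos[of y] by (intro mult_left_mono) auto
    finally show ?thesis using h_mult_V[of y] by (simp add: mult.left_commute)
  qed
  then show ?thesis unfolding LinfV_W_iff using N(1) h_measurable by auto
qed

abbreviation "Qh \<equiv> htrans Q \<Lambda> h"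

lemma Qh_meas: "\<phi> \<in> LinfV V \<Longrightarrow> Qh \<phi> \<in> borel_measurable borel"
  unfolding htrans_def[abs_def] using kop_measurable[OF LinfV_h_mult] h_measurable by simp

lemma Qh_add:
  assumes "\<phi> \<in> LinfV V" "\<psi> \<in> LinfV V"
  shows "Qh (\<lambda>x. \<phi> x + \<psi> x) = (\<lambda>x. Qh \<phi> x + Qh \<psi> x)"
proof
  fix x
  have "kop Q (\<lambda>y. h y * (\<phi> y + \<psi> y)) x = kop Q (\<lambda>y. h y * \<phi> y + h y * \<psi> y) x"
    by (simp add: distrib_left)
  also have "\<dots> = kop Q (\<lambda>y. h y * \<phi> y) x + kop Q (\<lambda>y. h y * \<psi> y) x"
    by (rule kop_add[OF LinfV_h_mult[OF assms(1)] LinfV_h_mult[OF assms(2)]])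
  finally show "Qh (\<lambda>x. \<phi> x + \<psi> x) x = Qh \<phi> x + Qh \<psi> x" unfolding htrans_def by (simp add: add_divide_distrib)
qed

lemma Qh_scale: "Qh (\<lambda>x. c * \<phi> x) = (\<lambda>x. c * Qh \<phi> x)"
proof
  fix x
  have "kop Q (\<lambda>y. h y * (c * \<phi> y)) x = c * kop Q (\<lambda>y. h y * \<phi> y) x"
    using kop_scale[of c "\<lambda>y. h y * \<phi> y" x] by (simp add: mult_ac)
  then show "Qh (\<lambda>x. c * \<phi> x) x = c * Qh \<phi> x" unfolding htrans_def by simp
qed

lemma Qh_const: "Qh (\<lambda>_. c) = (\<lambda>_. c)"
proof
  fix x
  have "kop Q (\<lambda>y. h y * c) x = c * (\<Lambda> * h x)" using kop_scale[of c h x] h_eig by (simp add: mult_ac)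
  then show "Qh (\<lambda>_. c) x = c" unfolding htrans_def using \<Lambda>_pos h_pos[of x] by simp
qed

lemma Qh_mono: "\<phi> \<in> LinfV V \<Longrightarrow> \<psi> \<in> LinfV V \<Longrightarrow> (\<And>y. \<phi> y \<le> \<psi> y) \<Longrightarrow> Qh \<phi> x \<le> Qh \<psi> x"
  using kop_mono[OF LinfV_h_mult LinfV_h_mult, of \<phi> \<psi> x] h_pos \<Lambda>_pos
  by (simp add: htrans_def divide_right_mono mult_left_mono less_imp_le)

lemma Qh_tendsto:
  assumes "\<And>n. \<phi>s n \<in> LinfV V" "\<phi> \<in> LinfV V" "\<And>n y. \<bar>\<phi>s n y\<bar> \<le> N * V y" "\<And>y. (\<lambda>n. \<phi>s n y) \<longlonglongrightarrow> \<phi> y"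
  shows "(\<lambda>n. Qh (\<phi>s n) x) \<longlonglongrightarrow> Qh \<phi> x"
proof -
  have "(\<lambda>n. kop Q (\<lambda>y. h y * \<phi>s n y) x) \<longlonglongrightarrow> kop Q (\<lambda>y. h y * \<phi> y) x"
    unfolding kop_def
  proof (rule integral_dominated_convergence[where w="\<lambda>y. N * W y"])
    show "(\<lambda>y. h y * \<phi> y) \<in> borel_measurable (Q x)" "\<And>n. (\<lambda>y. h y * \<phi>s n y) \<in> borel_measurable (Q x)"
      using LinfV_measurable[OF LinfV_h_mult] measurable_Q assms(1,2) by blast+
    show "integrable (Q x) (\<lambda>y. N * W y)" using integrable_Q_W by simp
    show "AE y in Q x. (\<lambda>n. h y * \<phi>s n y) \<longlonglongrightarrow> h y * \<phi> y" using assms(4) by (simp add: tendsto_mult_left)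
    have "\<bar>h y * \<phi>s n y\<bar> \<le> N * W y" for n y
      using mult_left_mono[OF assms(3)[of n y], of "h y"] h_pos[of y] h_mult_V[of y]
      by (simp add: abs_mult mult.left_commute)
    then show "\<And>n. AE y in Q x. norm (h y * \<phi>s n y) \<le> N * W y" by simp
  qed
  then show ?thesis unfolding htrans_def using \<Lambda>_pos h_pos[of x] by (intro tendsto_intros) auto
qed

lemma Qh_V: "Qh V x = kop Q W x / (\<Lambda> * h x)"
  using h_mult_V by (simp add: htrans_def)

lemma sets_eta[simp, measurable_cong]: "n \<ge> 1 \<Longrightarrow> sets (\<eta> n) = sets borel"
  using \<eta>_prob by blast

lemma measurable_eta: "n \<ge> 1 \<Longrightarrow> f \<in> borel_measurable borel \<Longrightarrow> f \<in> borel_measurable (\<eta> n)"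
  by (subst measurable_cong_sets[OF sets_eta refl])

lemma nn_integral_eta_le_Q:
  fixes g :: "'a \<Rightarrow> ennreal"
  assumes n: "n \<ge> 1" and x: "x \<in> K n" and g: "g \<in> borel_measurable borel"
  shows "ennreal (\<alpha> n) * (\<integral>\<^sup>+y. g y \<partial>\<eta> n) \<le> (\<integral>\<^sup>+y. g y \<partial>Q x)"
proof -
  let ?\<eta> = "scale_measure (ennreal (\<alpha> n)) (\<eta> n)"
  have sets: "sets ?\<eta> = sets (Q x)" using n by simp
  have "emeasure ?\<eta> A \<le> emeasure (Q x) A" for A
    using minor[OF n x, of A] n by (cases "A \<in> sets borel") (simp_all add: emeasure_notin_sets)
  then have "?\<eta> \<le> Q x"
    unfolding le_measure_iff using sets sets_eq_imp_space_eq[OF sets] by (simp add: le_fun_def)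
  then have "(\<integral>\<^sup>+y. g y \<partial>?\<eta>) \<le> (\<integral>\<^sup>+y. g y \<partial>Q x)" by (rule nn_integral_mono_measure[OF sets])
  then show ?thesis using nn_integral_scale_measure[OF measurable_eta[OF n g]] by simp
qed

lemma integrable_eta:
  assumes n: "n \<ge> 1" and x: "x \<in> K n" and f: "f \<in> LinfV W"
  shows "integrable (\<eta> n) f"
proof -
  have "ennreal (\<alpha> n) * (\<integral>\<^sup>+y. ennreal (W y) \<partial>\<eta> n) < \<infinity>"
    using nn_integral_eta_le_Q[OF n x, of "\<lambda>y. ennreal (W y)"] W_meas integrable_Q_W[of x]
    by (auto simp: integrable_iff_bounded abs_of_pos[OF W_pos] intro: le_less_trans)
  then have "(\<integral>\<^sup>+y. ennreal (W y) \<partial>\<eta> n) = 0 \<or> (\<integral>\<^sup>+y. ennreal (W y) \<partial>\<eta> n) < \<infinity>"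
    using \<alpha>_pos[OF n] by (simp add: ennreal_mult_less_top top.not_eq_extremum)
  then have "(\<integral>\<^sup>+y. ennreal (norm (W y)) \<partial>\<eta> n) < \<infinity>" by (auto simp: abs_of_pos[OF W_pos])
  then have "integrable (\<eta> n) W" by (rule integrableI_bounded[OF measurable_eta[OF n W_meas]])
  then show ?thesis using sets_eta[OF n] W_pos f by (rule integrable_LinfV)
qed

lemma integral_eta_le_kop:
  assumes n: "n \<ge> 1" and x: "x \<in> K n" and f: "f \<in> LinfV W" and nn: "\<And>y. 0 \<le> f y"
  shows "\<alpha> n * (\<integral>y. f y \<partial>\<eta> n) \<le> kop Q f x"
proof -
  have fm: "(\<lambda>y. ennreal (f y)) \<in> borel_measurable borel" using LinfV_measurable[OF f] by simp
  have "ennreal (\<alpha> n * (\<integral>y. f y \<partial>\<eta> n)) = ennreal (\<alpha> n) * ennreal (\<integral>y. f y \<partial>\<eta> n)"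
    using \<alpha>_pos[OF n] by (simp add: ennreal_mult')
  also have "ennreal (\<integral>y. f y \<partial>\<eta> n) = (\<integral>\<^sup>+y. ennreal (f y) \<partial>\<eta> n)"
    by (rule nn_integral_eq_integral[OF integrable_eta[OF n x f], symmetric]) (simp add: nn)
  also have "ennreal (\<alpha> n) * \<dots> \<le> (\<integral>\<^sup>+y. ennreal (f y) \<partial>Q x)" by (rule nn_integral_eta_le_Q[OF n x fm])
  also have "\<dots> = ennreal (kop Q f x)"
    unfolding kop_def by (rule nn_integral_eq_integral[OF integrable_Q[OF f]]) (simp add: nn)
  finally show ?thesis using nn by (simp add: kop_def integral_nonneg_AE)
qed

lemma integral_eta_h_pos:
  assumes n: "n \<ge> 1" and x: "x \<in> K n"
  shows "0 < (\<integral>y. h y \<partial>\<eta> n)"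
proof -
  interpret prob_space "\<eta> n" using \<eta>_prob[OF n] by blast
  have "(\<integral>y. h y \<partial>\<eta> n) \<noteq> 0"
  proof
    assume "(\<integral>y. h y \<partial>\<eta> n) = 0"
    then have "AE y in \<eta> n. h y = 0"
      using integral_nonneg_eq_0_iff_AE[OF integrable_eta[OF n x h_in]] h_pos by (simp add: less_imp_le)
    moreover have "AE y in \<eta> n. h y = 0 \<longrightarrow> False" using h_pos by (intro AE_I2) (metis less_irrefl)
    ultimately have "AE y in \<eta> n. False" by (rule AE_mp)
    then show False by simp
  qed
  moreover have "0 \<le> (\<integral>y. h y \<partial>\<eta> n)" using h_pos by (simp add: integral_nonneg_AE less_imp_le)
  ultimately show ?thesis by simp
qed

lemma K_subset:
  assumes "1 \<le> n" "n \<le> m"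
  shows "K n \<subseteq> K m"
  using assms(2)
proof (induction m rule: dec_induct)
  case (step k)
  then have "K k \<subseteq> K (Suc k)" using assms(1) K_mono[of k] by simp
  with step.IH show ?case by blast
qed simp

lemma integral_eta_h_le: "n \<ge> 1 \<Longrightarrow> x \<in> K n \<Longrightarrow> \<alpha> n * (\<integral>y. h y \<partial>\<eta> n) \<le> \<Lambda> * h x"
  using integral_eta_le_kop[OF _ _ h_in] h_pos h_eig by (simp add: less_imp_le)

lemma Qh_V_le: "n \<ge> 1 \<Longrightarrow> Qh V x \<le> \<gamma> n / \<Lambda> * V x + b n * indicator (K n) x / (\<Lambda> * h x)"
proof -
  assume n: "n \<ge> 1"
  have "0 < \<Lambda> * h x" using \<Lambda>_pos h_pos[of x] by simp
  then have "Qh V x \<le> (\<gamma> n * W x + b n * indicator (K n) x) / (\<Lambda> * h x)"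
    unfolding Qh_V using kop_W_le[OF n] by (simp add: divide_right_mono)
  also have "\<dots> = \<gamma> n / \<Lambda> * V x + b n * indicator (K n) x / (\<Lambda> * h x)"
    unfolding V_def by (simp add: add_divide_distrib)
  finally show ?thesis .
qed

lemma eventually_\<gamma>_less: "0 < c \<Longrightarrow> \<exists>n\<ge>1. \<forall>m\<ge>n. \<gamma> m < c"
  using order_tendstoD(2)[OF \<gamma>_lim] unfolding eventually_sequentially
  by (metis le_trans max.cobounded1 max.cobounded2)

lemma Qh_drift:
  obtains g C where "0 < g" "g \<le> 1/4" "0 \<le> C" "\<And>x. Qh V x \<le> g * V x + C"
proof -
  obtain n where n: "n \<ge> 1" "\<gamma> n < \<Lambda> / 4" using eventually_\<gamma>_less[of "\<Lambda> / 4"] \<Lambda>_pos by auto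
  define C where "C = b n / (\<alpha> n * (\<integral>y. h y \<partial>\<eta> n))"
  have "0 \<le> (\<integral>y. h y \<partial>\<eta> n)" using h_pos by (simp add: integral_nonneg_AE less_imp_le)
  then have C: "0 \<le> C" unfolding C_def using b_pos[OF n(1)] \<alpha>_pos[OF n(1)] by simp
  have bC: "b n * indicator (K n) x / (\<Lambda> * h x) \<le> C" for x
  proof (cases "x \<in> K n")
    case True
    have "0 < \<alpha> n * (\<integral>y. h y \<partial>\<eta> n)" using \<alpha>_pos[OF n(1)] integral_eta_h_pos[OF n(1) True] by simp
    then show ?thesis
      using integral_eta_h_le[OF n(1) True] b_pos[OF n(1)] True unfolding C_def by (simp add: divide_left_mono)
  qed (use C in simp)
  then have "Qh V x \<le> \<gamma> n / \<Lambda> * V x + C" for x using Qh_V_le[OF n(1), of x] bC[of x] by linarith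
  moreover have "0 < \<gamma> n / \<Lambda>" "\<gamma> n / \<Lambda> \<le> 1/4" using n \<gamma>_pos[OF n(1)] \<Lambda>_pos by (auto simp: divide_le_eq)
  ultimately show ?thesis using that C by blast
qed

text \<open>Outside \<open>K m\<close> the drift forces \<open>Qh V < 1\<close> on \<open>{V \<le> R}\<close>, whereas \<open>Qh V \<ge> Qh 1 = 1\<close>.\<close>
lemma sublevel_subset_K:
  assumes R: "0 < R"
  obtains m where "m \<ge> 1" "undefined \<in> K m" "\<And>x. V x \<le> R \<Longrightarrow> x \<in> K m"
proof -
  obtain m1 where m1: "m1 \<ge> 1" "undefined \<in> K m1" using K_exhaust[of "{undefined}"] by auto
  obtain m2 where m2: "m2 \<ge> 1" "\<And>m. m \<ge> m2 \<Longrightarrow> \<gamma> m < \<Lambda> / R" using eventually_\<gamma>_less[of "\<Lambda> / R"] \<Lambda>_pos R by auto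
  define m where "m = max m1 m2"
  have m: "m \<ge> 1" "\<gamma> m < \<Lambda> / R" "undefined \<in> K m"
    unfolding m_def using m1 m2 K_subset[OF m1(1), of "max m1 m2"] by auto
  have "x \<in> K m" if "V x \<le> R" for x
  proof (rule ccontr)
    assume "x \<notin> K m"
    then have "Qh V x \<le> \<gamma> m / \<Lambda> * V x" using Qh_V_le[OF m(1), of x] by simp
    also have "\<dots> \<le> \<gamma> m / \<Lambda> * R" using that \<gamma>_pos[OF m(1)] \<Lambda>_pos by (intro mult_left_mono) auto
    also have "\<dots> < 1" using m(2) R \<Lambda>_pos by (simp add: field_simps)
    finally have "Qh V x < 1" .
    moreover have "Qh (\<lambda>_. 1) x \<le> Qh V x"
      using V_ge1 by (intro Qh_mono LinfV_V_self LinfV_V_const)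
    ultimately show False by (simp add: Qh_const)
  qed
  with m show ?thesis using that by blast
qed

lemma Qh_minorization:
  assumes m: "m \<ge> 1" and x0: "x0 \<in> K m"
  obtains \<epsilon> \<nu> where "0 < \<epsilon>" "\<epsilon> \<le> 1"
    "\<And>\<phi> \<psi>. \<phi> \<in> LinfV V \<Longrightarrow> \<psi> \<in> LinfV V \<Longrightarrow> \<nu> (\<lambda>x. \<phi> x + \<psi> x) = \<nu> \<phi> + \<nu> \<psi>"
    "\<And>\<phi> c. \<nu> (\<lambda>x. c * \<phi> x) = c * \<nu> \<phi>"
    "\<nu> (\<lambda>_. 1) = 1" "0 \<le> \<nu> V"
    "\<And>\<psi> x. \<psi> \<in> LinfV V \<Longrightarrow> (\<And>y. 0 \<le> \<psi> y) \<Longrightarrow> x \<in> K m \<Longrightarrow> \<epsilon> * \<nu> \<psi> \<le> Qh \<psi> x"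
proof -
  obtain H where H: "1 \<le> H" "\<And>y. y \<in> K m \<Longrightarrow> h y \<le> H"
  proof -
    obtain H0 where H0: "\<And>y. y \<in> K m \<Longrightarrow> \<bar>W y\<bar> \<le> H0"
      using W_bdd[OF K_compact[OF m]] unfolding bounded_iff by auto
    have "h y \<le> H0" if "y \<in> K m" for y using h_le_W[of y] H0[OF that] by linarith
    then show ?thesis by (intro that[of "max H0 1"]) (auto simp: le_max_iff_disj)
  qed
  define c where "c = (\<integral>y. h y \<partial>\<eta> m)"
  have c: "0 < c" unfolding c_def by (rule integral_eta_h_pos[OF m x0])
  define \<nu> where "\<nu> \<psi> = (\<integral>y. h y * \<psi> y \<partial>\<eta> m) / c" for \<psi>
  define \<epsilon> where "\<epsilon> = min 1 (\<alpha> m * c / (\<Lambda> * H))"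
  have \<epsilon>: "0 < \<epsilon>" "\<epsilon> \<le> 1" "\<epsilon> \<le> \<alpha> m * c / (\<Lambda> * H)"
    unfolding \<epsilon>_def using \<alpha>_pos[OF m] c \<Lambda>_pos H(1) by auto
  have int: "integrable (\<eta> m) (\<lambda>y. h y * \<psi> y)" if "\<psi> \<in> LinfV V" for \<psi>
    by (rule integrable_eta[OF m x0 LinfV_h_mult[OF that]])
  show ?thesis
  proof (rule that[of \<epsilon> \<nu>])
    show "\<nu> (\<lambda>x. \<phi> x + \<psi> x) = \<nu> \<phi> + \<nu> \<psi>" if "\<phi> \<in> LinfV V" "\<psi> \<in> LinfV V" for \<phi> \<psi>
      using Bochner_Integration.integral_add[OF int[OF that(1)] int[OF that(2)]]
      unfolding \<nu>_def by (simp add: distrib_left add_divide_distrib)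
    show "\<nu> (\<lambda>x. a * \<phi> x) = a * \<nu> \<phi>" for \<phi> a unfolding \<nu>_def by (simp add: mult.left_commute)
    show "\<nu> (\<lambda>_. 1) = 1" using c unfolding \<nu>_def c_def by simp
    have "0 \<le> (\<integral>y. W y \<partial>\<eta> m)" using W_pos by (simp add: integral_nonneg_AE less_imp_le)
    then show "0 \<le> \<nu> V" unfolding \<nu>_def h_mult_V using c by simp
    show "\<epsilon> * \<nu> \<psi> \<le> Qh \<psi> x" if \<psi>: "\<psi> \<in> LinfV V" and nn: "\<And>y. 0 \<le> \<psi> y" and x: "x \<in> K m" for \<psi> x
    proof -
      define I where "I = (\<integral>y. h y * \<psi> y \<partial>\<eta> m)"
      have hnn: "0 \<le> h y * \<psi> y" for y using nn[of y] h_pos[of y] by simp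
      then have I: "0 \<le> I" unfolding I_def by (simp add: integral_nonneg_AE)
      have hx: "0 < \<Lambda> * h x" using \<Lambda>_pos h_pos[of x] by simp
      have "\<epsilon> * \<nu> \<psi> \<le> \<alpha> m * c / (\<Lambda> * H) * \<nu> \<psi>"
        using \<epsilon>(3) I c unfolding \<nu>_def I_def[symmetric] by (intro mult_right_mono) auto
      also have "\<dots> = \<alpha> m * I / (\<Lambda> * H)" unfolding \<nu>_def I_def[symmetric] using c by simp
      also have "\<dots> \<le> \<alpha> m * I / (\<Lambda> * h x)"
        using hx H \<Lambda>_pos I \<alpha>_pos[OF m] x by (intro divide_left_mono) auto
      also have "\<dots> \<le> kop Q (\<lambda>y. h y * \<psi> y) x / (\<Lambda> * h x)"
        using integral_eta_le_kop[OF m x LinfV_h_mult[OF \<psi>] hnn] hx unfolding I_def by (simp add: divide_right_mono)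
      finally show ?thesis unfolding htrans_def .
    qed
  qed (use \<epsilon> in auto)
qed

lemma harris_Qh: "\<exists>g C R \<epsilon> \<nu>. harris Qh V g C R \<epsilon> \<nu>"
proof -
  obtain g C where g: "0 < g" "g \<le> 1/4" and C: "0 \<le> C" and drift: "\<And>x. Qh V x \<le> g * V x + C"
    using Qh_drift by blast
  define R where "R = 8 * C + 1"
  obtain m where m: "m \<ge> 1" "undefined \<in> K m" and sublevel: "\<And>x. V x \<le> R \<Longrightarrow> x \<in> K m"
    using sublevel_subset_K[of R] C unfolding R_def by auto
  obtain \<epsilon> \<nu> where \<epsilon>: "0 < \<epsilon>" "\<epsilon> \<le> 1"
    and \<nu>: "\<And>\<phi> \<psi>. \<phi> \<in> LinfV V \<Longrightarrow> \<psi> \<in> LinfV V \<Longrightarrow> \<nu> (\<lambda>x. \<phi> x + \<psi> x) = \<nu> \<phi> + \<nu> \<psi>"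
      "\<And>\<phi> c. \<nu> (\<lambda>x. c * \<phi> x) = c * \<nu> \<phi>" "\<nu> (\<lambda>_. 1) = 1" "0 \<le> \<nu> V"
    and minor: "\<And>\<psi> x. \<psi> \<in> LinfV V \<Longrightarrow> (\<And>y. 0 \<le> \<psi> y) \<Longrightarrow> x \<in> K m \<Longrightarrow> \<epsilon> * \<nu> \<psi> \<le> Qh \<psi> x"
    using Qh_minorization[OF m] by blast
  have "harris Qh V g C R \<epsilon> \<nu>"
  proof unfold_locales
    show "(\<lambda>n. Qh (\<phi>s n) x) \<longlonglongrightarrow> Qh \<phi> x"
      if "\<And>n. \<phi>s n \<in> LinfV V" "\<phi> \<in> LinfV V" "\<And>n y. \<bar>\<phi>s n y\<bar> \<le> N * V y" "\<And>y. (\<lambda>n. \<phi>s n y) \<longlonglongrightarrow> \<phi> y"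
      for \<phi>s \<phi> N x
      using that by (rule Qh_tendsto)
  qed (use V_meas V_ge1 Qh_meas Qh_add Qh_scale Qh_const Qh_mono drift g C \<epsilon> \<nu> minor sublevel
    in \<open>auto simp: R_def\<close>)
  then show ?thesis by blast
qed

end

text \<open>The irreducibility and regularity hypotheses, and the identification of \<open>\<Lambda>\<close> as the
  spectral radius, are only needed to construct \<open>h\<close>.\<close>
theorem lemma3:
  fixes Q :: "'a::polish_space \<Rightarrow> 'a measure"
    and K :: "nat \<Rightarrow> 'a set"
    and W :: "'a \<Rightarrow> real"
    and \<gamma> b \<alpha> :: "nat \<Rightarrow> real"
    and \<eta> :: "nat \<Rightarrow> 'a measure"
    and \<Lambda> :: real
    and h :: "'a \<Rightarrow> real"
  assumes kernel: "is_kernel Q"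
    and K_compact: "\<And>n. n \<ge> 1 \<Longrightarrow> compact (K n)"
    and K_mono: "\<And>n. n \<ge> 1 \<Longrightarrow> K n \<subseteq> K (Suc n)"
    and K_exhaust: "\<And>C. compact C \<Longrightarrow> \<exists>m\<ge>1. C \<subseteq> K m"
    (* Assumption 1 *)
    and W_meas: "W \<in> borel_measurable borel"
    and W_ge1: "\<And>x. W x \<ge> 1"
    and W_bdd: "\<And>C. compact C \<Longrightarrow> bounded (W ` C)"
    and \<gamma>_pos: "\<And>n. n \<ge> 1 \<Longrightarrow> \<gamma> n > 0"
    and b_pos: "\<And>n. n \<ge> 1 \<Longrightarrow> b n > 0"
    and \<gamma>_lim: "\<gamma> \<longlonglongrightarrow> 0"
    and lyap: "\<And>n x. n \<ge> 1 \<Longrightarrow>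
       (\<integral>\<^sup>+y. ennreal (W y) \<partial>(Q x)) \<le> ennreal (\<gamma> n * W x + b n * indicator (K n) x)"
    (* Assumption 2 *)
    and \<eta>_prob: "\<And>n. n \<ge> 1 \<Longrightarrow> prob_space (\<eta> n) \<and> sets (\<eta> n) = sets borel"
    and \<alpha>_pos: "\<And>n. n \<ge> 1 \<Longrightarrow> \<alpha> n > 0"
    and minor: "\<And>n x A. n \<ge> 1 \<Longrightarrow> x \<in> K n \<Longrightarrow> A \<in> sets borel \<Longrightarrow>
       emeasure (Q x) A \<ge> ennreal (\<alpha> n) * emeasure (\<eta> n) A"
    and irred: "\<And>n0 \<phi>. n0 \<ge> 1 \<Longrightarrow> \<phi> \<in> LinfV W \<Longrightarrow> (\<forall>x. \<phi> x \<ge> 0) \<Longrightarrow>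
       (\<forall>n\<ge>n0. (\<integral>\<^sup>+y. ennreal (\<phi> y) \<partial>(\<eta> n)) = 0) \<Longrightarrow>
       (\<forall>x. (\<integral>\<^sup>+y. ennreal (\<phi> y) \<partial>(Q x)) = 0)"
    (* Assumption 3 *)
    and regular: "\<And>n \<phi>. n \<ge> 1 \<Longrightarrow> \<phi> \<in> borel_measurable borel \<Longrightarrow> bounded (\<phi> ` K n) \<Longrightarrow>
       continuous_on (K n) (kop Q (\<lambda>y. \<phi> y * indicator (K n) y))"
    (* spectral radius and eigenfunction *)
    and \<Lambda>_def: "\<Lambda> = spectral_radiusV W Q"
    and \<Lambda>_pos: "\<Lambda> > 0"
    and h_in: "h \<in> LinfV W"
    and h_eig: "kop Q h = (\<lambda>x. \<Lambda> * h x)"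
    and h_norm: "normV W h = 1"
    and h_pos: "\<And>x. h x > 0"
  shows "(\<forall>x. htrans Q \<Lambda> h (\<lambda>_. 1) x = 1)
    \<and> (\<forall>x. W x / h x \<ge> 1)
    \<and> (\<exists>g C. 0 < g \<and> g < 1 \<and> C \<ge> 0 \<and>
          (\<forall>x. htrans Q \<Lambda> h (\<lambda>y. W y / h y) x \<le> g * (W x / h x) + C))
    \<and> (\<exists>\<mu>. (prob_space \<mu> \<and> sets \<mu> = sets borel \<and>
              (\<forall>A\<in>sets borel. (\<integral>x. htrans Q \<Lambda> h (indicator A) x \<partial>\<mu>) = measure \<mu> A))
         \<and> (\<forall>\<nu>. prob_space \<nu> \<and> sets \<nu> = sets borel \<and>
              (\<forall>A\<in>sets borel. (\<integral>x. htrans Q \<Lambda> h (indicator A) x \<partial>\<nu>) = measure \<nu> A)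
              \<longrightarrow> \<nu> = \<mu>)
         \<and> (\<integral>\<^sup>+x. ennreal (W x / h x) \<partial>\<mu>) < \<infinity>
         \<and> (\<exists>c a. c > 0 \<and> 0 < a \<and> a < 1 \<and>
              (\<forall>\<phi>\<in>LinfV (\<lambda>x. W x / h x). \<forall>k::nat. k \<ge> 1 \<longrightarrow>
                 normV (\<lambda>x. W x / h x) (\<lambda>x. (htrans Q \<Lambda> h ^^ k) \<phi> x - (\<integral>y. \<phi> y \<partial>\<mu>))
                 \<le> c * a ^ k * normV (\<lambda>x. W x / h x) (\<lambda>x. \<phi> x - (\<integral>y. \<phi> y \<partial>\<mu>)))))"
proof -
  interpret h_transform Q K W \<gamma> b \<alpha> \<eta> \<Lambda> h
    by (rule h_transform.intro) fact+
  obtain g C R \<epsilon> \<nu> where "harris (htrans Q \<Lambda> h) V g C R \<epsilon> \<nu>"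
    using harris_Qh by blast
  then interpret H: harris "htrans Q \<Lambda> h" V g C R \<epsilon> \<nu> .
  show ?thesis
    unfolding V_eq V_def[symmetric]
    using Qh_const V_ge1 H.lyapunov_drift H.geometric_ergodicity by (intro conjI) auto
qed

end
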